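(* Let $x_a,x_b\in\mathbb{R}$, $U=\{x\in C^1[a,b]: x(a)=x_a,\ x(b)=x_b\}$, and for $(x,\rho)\in U\times(0,\infty)$ let $J_\rho(x,\rho)=\int_a^b L(t,x(t),{}^CD_{a+}^{\alpha,\rho}x(t))\,dt$. If $(x,\rho)$ is a (local) minimizer of $J_\rho$ on $U\times(0,\infty)$, then $$\partial_2L(t,x(t),{}^CD_{a+}^{\alpha,\rho} x(t))-D_{b-}^{\alpha,\rho}\big(\partial_3L(t,x(t),{}^CD_{a+}^{\alpha,\rho} x(t))\big)=0\quad\text{on }[a,b],$$ and $$\int_a^b \partial_3L(t,x(t),{}^CD_{a+}^{\alpha,\rho}x(t))\,\psi'(\rho)\,dt=0,$$ where, for each fixed $t$, $\psi(\rho)={}^CD_{a+}^{\alpha,\rho}x(t)$ is regarded as a function of $\rho$.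
   Context: Fix $0<a<b<\infty$ and $\alpha\in(0,1)$. For $\rho>0$ and $x\in C^1[a,b]$, ${}^CD_{a+}^{\alpha,\rho} x(t)=\frac{\rho^\alpha}{\Gamma(1-\alpha)}\, t^{1-\rho}\frac{d}{dt}\int_a^t \frac{\tau^{\rho-1}}{(t^\rho-\tau^\rho)^\alpha}[x(\tau)-x(a)]\,d\tau=\frac{\rho^\alpha}{\Gamma(1-\alpha)}\int_a^t (t^\rho-\tau^\rho)^{-\alpha}x'(\tau)\,d\tau$. For a function $f$, $D_{b-}^{\alpha,\rho} f(t)=\frac{\rho^\alpha}{\Gamma(1-\alpha)}\frac{d}{dt}\int_t^b (\tau^\rho-t^\rho)^{-\alpha}f(\tau)\,d\tau$. $\partial_i$ denotes the partial derivative with respect to the $i$-th argument. $L:[a,b]\times\mathbb{R}^2\to\mathbb{R}$ is continuously differentiable with respect to its second and third arguments, and for every $x\in C^1[a,b]$ the map $t\mapsto D_{b-}^{\alpha,\rho}(\partial_3L(t,x(t),{}^CD_{a+}^{\alpha,\rho}x(t)))$ is continuous. *)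

theory Defs
  imports "HOL-Analysis.Analysis"
begin

definition C1_on :: "real \<Rightarrow> real \<Rightarrow> (real \<Rightarrow> real) \<Rightarrow> bool" where
  "C1_on a b x \<longleftrightarrow>
     (\<exists>D. (\<forall>t\<in>{a..b}. (x has_vector_derivative D t) (at t within {a..b})) \<and> continuous_on {a..b} D)"

definition dC1 :: "real \<Rightarrow> real \<Rightarrow> (real \<Rightarrow> real) \<Rightarrow> real \<Rightarrow> real" where
  "dC1 a b x t = vector_derivative x (at t within {a..b})"

text \<open>Caputo--Katugampola derivative (second, equivalent form of the definition).\<close>
definition caputo_kat :: "real \<Rightarrow> real \<Rightarrow> real \<Rightarrow> real \<Rightarrow> (real \<Rightarrow> real) \<Rightarrow> real \<Rightarrow> real" where
  "caputo_kat a b alpha rho x t =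
     rho powr alpha / Gamma (1 - alpha) *
     integral {a..t} (\<lambda>\<tau>. (t powr rho - \<tau> powr rho) powr (- alpha) * dC1 a b x \<tau>)"

definition kat_right_int :: "real \<Rightarrow> real \<Rightarrow> real \<Rightarrow> (real \<Rightarrow> real) \<Rightarrow> real \<Rightarrow> real" where
  "kat_right_int b alpha rho f s =
     integral {s..b} (\<lambda>\<tau>. (\<tau> powr rho - s powr rho) powr (- alpha) * f \<tau>)"

definition kat_right :: "real \<Rightarrow> real \<Rightarrow> real \<Rightarrow> real \<Rightarrow> (real \<Rightarrow> real) \<Rightarrow> real \<Rightarrow> real" where
  "kat_right a b alpha rho f t =
     rho powr alpha / Gamma (1 - alpha) *
     vector_derivative (kat_right_int b alpha rho f) (at t within {a..b})"

definition partial2 :: "(real \<Rightarrow> real \<Rightarrow> real \<Rightarrow> real) \<Rightarrow> real \<Rightarrow> real \<Rightarrow> real \<Rightarrow> real" where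
  "partial2 L t y z = deriv (\<lambda>y'. L t y' z) y"

definition partial3 :: "(real \<Rightarrow> real \<Rightarrow> real \<Rightarrow> real) \<Rightarrow> real \<Rightarrow> real \<Rightarrow> real \<Rightarrow> real" where
  "partial3 L t y z = deriv (\<lambda>z'. L t y z') z"

definition Jfun :: "real \<Rightarrow> real \<Rightarrow> real \<Rightarrow> (real \<Rightarrow> real \<Rightarrow> real \<Rightarrow> real) \<Rightarrow> (real \<Rightarrow> real) \<Rightarrow> real \<Rightarrow> real" where
  "Jfun a b alpha L x rho = integral {a..b} (\<lambda>t. L t (x t) (caputo_kat a b alpha rho x t))"

end

theory Submission
  imports Defs
begin

text \<open>
  Both conditions say that a first variation of \<open>J(y, \<rho>) = \<integral>\<^sub>a\<^sup>b L(t, y(t), \<^sup>CD\<^sup>\<alpha>\<^sup>,\<^sup>\<rho> y(t)) dt\<close>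
  vanishes. Along \<open>x + \<epsilon>\<eta>\<close>, with \<open>\<eta>\<close> of class \<open>C\<^sup>1\<close> and \<open>\<eta>(a) = \<eta>(b) = 0\<close>, the Caputo derivative is
  linear, so the derivative at \<open>\<epsilon> = 0\<close> is \<open>\<integral> \<partial>\<^sub>2L \<eta> + \<partial>\<^sub>3L \<^sup>CD\<^sup>\<alpha>\<^sup>,\<^sup>\<rho>\<eta>\<close>. Fubini's theorem for the
  singular kernel followed by classical integration by parts turns the second summand into
  \<open>-\<integral> \<eta> D\<^sub>b\<^sub>-\<^sup>\<alpha>\<^sup>,\<^sup>\<rho>(\<partial>\<^sub>3L)\<close>, and the fundamental lemma of the calculus of variations yields the
  Euler--Lagrange equation. Along the order, the derivative of \<open>J(x, \<cdot>)\<close> at \<open>\<rho>\<close> is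
  \<open>\<integral> \<partial>\<^sub>3L \<psi>'(\<rho>)\<close>. Each differentiation under the integral sign is justified by dominated
  convergence: because \<open>a > 0\<close>, for \<open>\<rho>\<close> in a compact subset of \<open>(0, \<infinity>)\<close> the kernel
  \<open>(t\<^sup>\<rho> - \<tau>\<^sup>\<rho>)\<^sup>-\<^sup>\<alpha>\<close> and its derivative in \<open>\<rho>\<close> are bounded by multiples of the integrable \<open>(t - \<tau>)\<^sup>-\<^sup>\<alpha>\<close>.
\<close>

section \<open>Real powers and integration\<close>

lemma powr_ge_min_one:
  fixes a \<xi> r r2 :: real
  assumes "0 < a" "a \<le> \<xi>" "0 \<le> r" "r \<le> r2"
  shows "min 1 (a powr r2) \<le> \<xi> powr r"
proof (cases "1 \<le> \<xi>")
  case True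
  then show ?thesis using assms ge_one_powr_ge_zero by (meson min.coboundedI1)
next
  case False
  have "\<xi> powr r2 \<le> \<xi> powr r" using False assms by (intro powr_mono') auto
  moreover have "a powr r2 \<le> \<xi> powr r2" using assms by (intro powr_mono2) auto
  ultimately show ?thesis by linarith
qed

lemma powr_le_max_one:
  fixes b \<xi> r r2 :: real
  assumes "0 \<le> \<xi>" "\<xi> \<le> b" "0 \<le> r" "r \<le> r2"
  shows "\<xi> powr r \<le> max 1 (b powr r2)"
proof (cases "\<xi> \<le> 1")
  case True
  then have "\<xi> powr r \<le> 1" using assms by (intro powr_le1) auto
  then show ?thesis by simp
next
  case False
  have "\<xi> powr r \<le> \<xi> powr r2" using False assms by (intro powr_mono) auto
  also have "\<dots> \<le> b powr r2" using False assms by (intro powr_mono2) auto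
  finally show ?thesis by simp
qed

text \<open>This lower bound is what tames the singularity of the kernel \<open>(t\<^sup>r - \<tau>\<^sup>r)\<^sup>-\<^sup>\<alpha>\<close> at \<open>\<tau> = t\<close>.\<close>
lemma powr_diff_ge_linear:
  fixes a b r1 r2 :: real
  assumes "0 < a" "a \<le> b" "0 < r1"
  obtains m where "0 < m"
    "\<And>r t \<tau>. r1 \<le> r \<Longrightarrow> r \<le> r2 \<Longrightarrow> a \<le> \<tau> \<Longrightarrow> \<tau> \<le> t \<Longrightarrow> t \<le> b \<Longrightarrow>
       m * (t - \<tau>) \<le> t powr r - \<tau> powr r"
proof
  define m where "m = r1 * min 1 (a powr r2) / b"
  show "0 < m" using assms unfolding m_def by auto
  fix r t \<tau> :: real
  assume r: "r1 \<le> r" "r \<le> r2" and t: "a \<le> \<tau>" "\<tau> \<le> t" "t \<le> b"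
  show "m * (t - \<tau>) \<le> t powr r - \<tau> powr r"
  proof (cases "\<tau> = t")
    case False
    then have lt: "\<tau> < t" using t by simp
    have "\<And>z. \<tau> \<le> z \<Longrightarrow> z \<le> t \<Longrightarrow> ((\<lambda>z. z powr r) has_real_derivative r * z powr (r - 1)) (at z)"
      using assms t by (auto intro!: has_real_derivative_powr)
    from MVT2[OF lt this] obtain z where z: "\<tau> < z" "z < t"
      "t powr r - \<tau> powr r = (t - \<tau>) * (r * z powr (r - 1))" by blast
    have zpos: "0 < z" using z assms t by auto
    have "min 1 (a powr r2) \<le> z powr r" using assms r t z by (intro powr_ge_min_one) auto
    then have "min 1 (a powr r2) / b \<le> z powr r / z"
      using zpos z t assms by (intro frac_le) auto
    then have "r1 * (min 1 (a powr r2) / b) \<le> r * z powr (r - 1)"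
      using assms r zpos by (intro mult_mono) (auto simp: powr_diff)
    from mult_left_mono[OF this, of "t - \<tau>"] show ?thesis
      using z lt unfolding m_def by (simp add: mult.commute)
  qed simp
qed

lemma abs_powr_diff_le:
  fixes r1 r r' al :: real
  assumes "0 < r1" "r1 \<le> r" "r1 \<le> r'" "0 \<le> al" "al \<le> 1"
  shows "\<bar>r powr al - r' powr al\<bar> \<le> al * r1 powr (al - 1) * \<bar>r - r'\<bar>"
proof -
  have "norm (r powr al - r' powr al) \<le> al * r1 powr (al - 1) * norm (r - r')"
  proof (rule field_differentiable_bound[where S = "{r1..}" and f' = "\<lambda>u. al * u powr (al - 1)"])
    fix u assume u: "u \<in> {r1..}"
    then have "0 < u" using assms by simp
    then show "((\<lambda>r. r powr al) has_field_derivative al * u powr (al - 1)) (at u within {r1..})"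
      by (rule has_field_derivative_at_within[OF has_real_derivative_powr])
    have "u powr (al - 1) \<le> r1 powr (al - 1)" using u assms by (intro powr_mono2') auto
    then have "al * u powr (al - 1) \<le> al * r1 powr (al - 1)" using assms(4) by (rule mult_left_mono)
    then show "norm (al * u powr (al - 1)) \<le> al * r1 powr (al - 1)"
      using assms by simp
  qed (use assms in auto)
  then show ?thesis by simp
qed

lemma abs_powr_ln_diff_le:
  fixes a r t \<tau> :: real
  assumes "0 < a" "a \<le> \<tau>" "\<tau> \<le> t" "0 \<le> r"
  shows "\<bar>t powr r * ln t - \<tau> powr r * ln \<tau>\<bar> \<le> (t powr r - \<tau> powr r) * \<bar>ln t\<bar> + \<tau> powr r * ((t - \<tau>) / a)"
proof -
  have D: "0 \<le> t powr r - \<tau> powr r" using assms by (simp add: powr_mono2)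
  have ln0: "0 \<le> ln t - ln \<tau>" using assms by simp
  have "ln t - ln \<tau> = ln (t / \<tau>)" using assms by (simp add: ln_div)
  also have "\<dots> \<le> t / \<tau> - 1" using assms by (intro ln_le_minus_one) auto
  also have "\<dots> = (t - \<tau>) / \<tau>" using assms by (simp add: field_simps)
  also have "\<dots> \<le> (t - \<tau>) / a" using assms by (intro divide_left_mono) auto
  finally have ln1: "ln t - ln \<tau> \<le> (t - \<tau>) / a" .
  have "t powr r * ln t - \<tau> powr r * ln \<tau> = (t powr r - \<tau> powr r) * ln t + \<tau> powr r * (ln t - ln \<tau>)"
    by (simp add: algebra_simps)
  also have "\<bar>\<dots>\<bar> \<le> (t powr r - \<tau> powr r) * \<bar>ln t\<bar> + \<tau> powr r * (ln t - ln \<tau>)"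
    using D ln0 abs_triangle_ineq[of "(t powr r - \<tau> powr r) * ln t" "\<tau> powr r * (ln t - ln \<tau>)"]
    by (simp add: abs_mult)
  also have "\<dots> \<le> (t powr r - \<tau> powr r) * \<bar>ln t\<bar> + \<tau> powr r * ((t - \<tau>) / a)"
    using ln1 by (intro add_left_mono mult_left_mono) auto
  finally show ?thesis .
qed

lemma abs_powr_ln_diff_le_powr_diff:
  fixes a b m r r2 t \<tau> :: real
  assumes t: "0 < a" "a \<le> \<tau>" "\<tau> \<le> t" "t \<le> b" and r: "0 \<le> r" "r \<le> r2"
    and m: "0 < m" "m * (t - \<tau>) \<le> t powr r - \<tau> powr r"
  shows "\<bar>t powr r * ln t - \<tau> powr r * ln \<tau>\<bar>
    \<le> (t powr r - \<tau> powr r) * (max \<bar>ln a\<bar> \<bar>ln b\<bar> + max 1 (b powr r2) / (a * m))"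
proof -
  define D where "D = t powr r - \<tau> powr r"
  have D: "0 \<le> D" unfolding D_def using t r by (simp add: powr_mono2)
  have "(t - \<tau>) / a = (m * (t - \<tau>)) / (a * m)" using m(1) by simp
  also have "\<dots> \<le> D / (a * m)" using m t unfolding D_def by (intro divide_right_mono) auto
  finally have "(t - \<tau>) / a \<le> D / (a * m)" .
  moreover have "ln a \<le> ln t" "ln t \<le> ln b" using t by auto
  then have "\<bar>ln t\<bar> \<le> max \<bar>ln a\<bar> \<bar>ln b\<bar>" by linarith
  moreover have "\<tau> powr r \<le> max 1 (b powr r2)" using t r by (intro powr_le_max_one) auto
  ultimately have "D * \<bar>ln t\<bar> + \<tau> powr r * ((t - \<tau>) / a)
      \<le> D * max \<bar>ln a\<bar> \<bar>ln b\<bar> + max 1 (b powr r2) * (D / (a * m))"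
    using D t by (intro add_mono mult_left_mono mult_mono) auto
  then show ?thesis
    using abs_powr_ln_diff_le[of a \<tau> t r] t r unfolding D_def by (simp add: algebra_simps)
qed

lemma has_integral_powr_shift_right:
  fixes s b al :: real
  assumes "al < 1" "s \<le> b"
  shows "((\<lambda>t. (t - s) powr (- al)) has_integral (b - s) powr (1 - al) / (1 - al)) {s..b}"
  using has_integral_shift_real_ivl[OF has_integral_powr_from_0[of "- al" "b - s"], of "- s"] assms
  by simp

lemma has_integral_powr_shift_left:
  fixes a t al :: real
  assumes "al < 1" "a \<le> t"
  shows "((\<lambda>\<tau>. (t - \<tau>) powr (- al)) has_integral (t - a) powr (1 - al) / (1 - al)) {a..t}"
proof -
  have "((\<lambda>u. (u - (- t)) powr (- al)) has_integral (t - a) powr (1 - al) / (1 - al)) {- t..- a}"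
    using has_integral_powr_shift_right[of al "- t" "- a"] assms by simp
  then show ?thesis
    by (subst has_integral_reflect_real[symmetric]) (simp add: add.commute)
qed

lemma abs_integral_le_singular_powr:
  fixes a t al K :: real and f :: "real \<Rightarrow> real"
  assumes "a \<le> t" "al < 1" "f integrable_on {a..t}"
    and "\<And>\<tau>. \<tau> \<in> {a..t} \<Longrightarrow> \<bar>f \<tau>\<bar> \<le> K * (t - \<tau>) powr (- al)"
  shows "\<bar>integral {a..t} f\<bar> \<le> K * ((t - a) powr (1 - al) / (1 - al))"
proof -
  have hint: "((\<lambda>\<tau>. K * (t - \<tau>) powr (- al)) has_integral K * ((t - a) powr (1 - al) / (1 - al))) {a..t}"
    using has_integral_powr_shift_left[OF assms(2,1)] by (rule has_integral_mult_right)
  show ?thesis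
    using integral_norm_bound_integral[OF assms(3) has_integral_integrable[OF hint]] assms(4)
      integral_unique[OF hint] by simp
qed

lemma mem_Icc_affine_unit: "a \<le> t \<Longrightarrow> s \<in> {0..1} \<Longrightarrow> a + (t - a) * s \<in> {a..t}"
  for a t s :: real
  using mult_left_mono[of s 1 "t - a"] by auto

lemma integral_rescale_unit_interval:
  fixes a t :: real and \<phi> :: "real \<Rightarrow> real"
  assumes "a < t" "\<phi> integrable_on {a..t}"
  shows "integral {a..t} \<phi> = (t - a) * integral {0..1} (\<lambda>s. \<phi> (a + (t - a) * s))"
    and "(\<lambda>s. \<phi> (a + (t - a) * s)) integrable_on {0..1}"
proof -
  have "((\<lambda>s. \<phi> ((t - a) *\<^sub>R s + a)) has_integral (integral {a..t} \<phi> /\<^sub>R (t - a) ^ DIM(real)))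
           (cbox ((a - a) /\<^sub>R (t - a)) ((t - a) /\<^sub>R (t - a)))"
    using assms by (intro has_integral_affinity') (auto simp: has_integral_integral)
  then have "((\<lambda>s. \<phi> (a + (t - a) * s)) has_integral (integral {a..t} \<phi> / (t - a))) {0..1}"
    using assms by (simp add: add.commute cbox_interval divide_inverse mult.commute)
  then show "integral {a..t} \<phi> = (t - a) * integral {0..1} (\<lambda>s. \<phi> (a + (t - a) * s))"
      "(\<lambda>s. \<phi> (a + (t - a) * s)) integrable_on {0..1}"
    using assms by (auto simp add: integral_unique has_integral_integrable)
qed

lemma integral_tendsto_dominated:
  fixes f :: "real \<Rightarrow> real \<Rightarrow> real"
  assumes ev: "\<forall>\<^sub>F y in at y0 within T. f y integrable_on S \<and> (\<forall>x\<in>S. \<bar>f y x\<bar> \<le> h x)"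
    and h: "h integrable_on S"
    and lim: "\<And>x. x \<in> S \<Longrightarrow> ((\<lambda>y. f y x) \<longlongrightarrow> g x) (at y0 within T)"
  shows "((\<lambda>y. integral S (f y)) \<longlongrightarrow> integral S g) (at y0 within T)"
  unfolding tendsto_at_iff_sequentially
proof (intro allI impI)
  fix X :: "nat \<Rightarrow> real" assume X: "\<forall>i. X i \<in> T - {y0}" "X \<longlonglongrightarrow> y0"
  then have Xf: "filterlim X (at y0 within T) sequentially"
    by (auto simp: filterlim_at intro!: always_eventually)
  from filterlim_iff[THEN iffD1, OF Xf, rule_format, OF ev]
  obtain N where N: "\<And>n. n \<ge> N \<Longrightarrow> f (X n) integrable_on S \<and> (\<forall>x\<in>S. \<bar>f (X n) x\<bar> \<le> h x)"
    by (auto simp: eventually_sequentially)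
  have "(\<lambda>n. integral S (f (X (n + N)))) \<longlonglongrightarrow> integral S g"
  proof (rule dominated_convergence(2)[OF _ h])
    show "f (X (n + N)) integrable_on S" for n using N[of "n + N"] by simp
    show "norm (f (X (n + N)) x) \<le> h x" if "x \<in> S" for n x using N[of "n + N"] that by simp
    show "(\<lambda>n. f (X (n + N)) x) \<longlonglongrightarrow> g x" if "x \<in> S" for x
      using LIMSEQ_ignore_initial_segment[OF filterlim_compose[OF lim[OF that] Xf]] .
  qed
  then show "((\<lambda>y. integral S (f y)) \<circ> X) \<longlonglongrightarrow> integral S g"
    unfolding o_def by (rule LIMSEQ_offset)
qed

lemma has_real_derivative_integral_dominated:
  fixes F :: "real \<Rightarrow> real \<Rightarrow> real"
  assumes lip: "\<forall>\<^sub>F e in nhds e0. F e integrable_on S \<and> (\<forall>t\<in>S. \<bar>F e t - F e0 t\<bar> \<le> h t * \<bar>e - e0\<bar>)"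
    and h: "h integrable_on S"
    and der: "\<And>t. t \<in> S \<Longrightarrow> ((\<lambda>e. F e t) has_real_derivative F' t) (at e0)"
  shows "((\<lambda>e. integral S (F e)) has_real_derivative integral S F') (at e0)"
proof -
  define Q where "Q e t = (F e t - F e0 t) / (e - e0)" for e t
  have F0: "F e0 integrable_on S"
    using lip unfolding eventually_nhds_conv_at by simp
  have Qint: "integral S (Q e) = (integral S (F e) - integral S (F e0)) / (e - e0)"
    if "F e integrable_on S" for e
    unfolding Q_def diff_divide_distrib using that F0
    by (simp add: integral_diff integral_divide integrable_on_divide)
  have lip_at: "\<forall>\<^sub>F e in at e0. F e integrable_on S \<and> (\<forall>t\<in>S. \<bar>F e t - F e0 t\<bar> \<le> h t * \<bar>e - e0\<bar>)"
    using lip unfolding eventually_nhds_conv_at by simp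
  moreover have "\<forall>\<^sub>F e in at e0. e \<noteq> e0" by (simp add: eventually_at_filter)
  ultimately have ev: "\<forall>\<^sub>F e in at e0. Q e integrable_on S \<and> (\<forall>t\<in>S. \<bar>Q e t\<bar> \<le> h t)"
  proof eventually_elim
    case (elim e)
    then have "Q e integrable_on S"
      unfolding Q_def diff_divide_distrib by (intro integrable_diff integrable_on_divide F0) auto
    moreover have "\<bar>Q e t\<bar> \<le> h t" if "t \<in> S" for t
      using elim that by (simp add: Q_def abs_divide divide_le_eq)
    ultimately show ?case by simp
  qed
  have "((\<lambda>e. integral S (Q e)) \<longlongrightarrow> integral S F') (at e0)"
  proof (rule integral_tendsto_dominated[OF ev h])
    show "((\<lambda>e. Q e t) \<longlongrightarrow> F' t) (at e0)" if "t \<in> S" for t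
      using der[OF that] unfolding Q_def has_field_derivative_iff .
  qed
  moreover have "\<forall>\<^sub>F e in at e0. integral S (Q e) = (integral S (F e) - integral S (F e0)) / (e - e0)"
    using lip_at by (auto elim: eventually_mono simp: Qint)
  ultimately show ?thesis
    unfolding has_field_derivative_iff by (rule Lim_transform_eventually)
qed

lemma integral_derivative_times_by_parts:
  fixes \<eta> \<eta>' K K' :: "real \<Rightarrow> real"
  assumes ab: "a \<le> b" and \<eta>: "\<And>t. (\<eta> has_real_derivative \<eta>' t) (at t)" "\<eta> a = 0" "\<eta> b = 0"
    and K: "\<And>t. t \<in> {a..b} \<Longrightarrow> (K has_vector_derivative K' t) (at t within {a..b})"
    and K': "continuous_on {a..b} K'"
  shows "integral {a..b} (\<lambda>t. \<eta>' t * K t) = - integral {a..b} (\<lambda>t. \<eta> t * K' t)"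
proof -
  have \<eta>_cont: "continuous_on {a..b} \<eta>"
    using \<eta>(1) by (intro continuous_at_imp_continuous_on) (auto intro: DERIV_isCont)
  have K_cont: "continuous_on {a..b} K"
    unfolding continuous_on_eq_continuous_within using K has_vector_derivative_continuous by blast
  have int: "((\<lambda>t. \<eta> t * K' t) has_integral integral {a..b} (\<lambda>t. \<eta> t * K' t)) {a..b}"
    by (intro integrable_integral integrable_continuous_interval continuous_intros \<eta>_cont K')
  have "((\<lambda>t. \<eta>' t * K t) has_integral - integral {a..b} (\<lambda>t. \<eta> t * K' t)) {a..b}"
  proof (rule integration_by_parts_interior[OF bounded_bilinear_mult, of a b \<eta> K \<eta>' K'])
    fix t assume t: "t \<in> {a<..<b}"
    show "(\<eta> has_vector_derivative \<eta>' t) (at t)"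
      using \<eta>(1) by (simp add: has_real_derivative_iff_has_vector_derivative)
    show "(K has_vector_derivative K' t) (at t)"
      using K[of t] t at_within_Icc_at[of a t b] by simp
  next
    show "((\<lambda>t. \<eta> t * K' t) has_integral \<eta> b * K b - \<eta> a * K a - - integral {a..b} (\<lambda>t. \<eta> t * K' t)) {a..b}"
      using int \<eta>(2,3) by simp
  qed (use ab \<eta>_cont K_cont in auto)
  then show ?thesis by (simp add: integral_unique)
qed

lemma borel_measurable_lebesgue_on_of_borel:
  fixes f :: "real \<Rightarrow> real"
  assumes "f \<in> borel_measurable borel"
  shows "f \<in> borel_measurable (lebesgue_on S)"
proof -
  have "f \<in> borel_measurable lebesgue"
    using assms by (auto intro: measurable_completion)
  then show ?thesis by (rule measurable_restrict_space1)
qed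

lemma set_integrable_absolutely_integrable_borel:
  fixes f :: "real \<Rightarrow> real"
  assumes "f absolutely_integrable_on S" "S \<in> sets borel" "f \<in> borel_measurable borel"
  shows "set_integrable lborel S f"
proof -
  have "(\<lambda>x. indicator S x *\<^sub>R f x) \<in> borel_measurable lborel"
    using assms(2,3) by measurable
  moreover have "integrable lebesgue (\<lambda>x. indicator S x *\<^sub>R f x)"
    using assms(1) unfolding set_integrable_def .
  ultimately show ?thesis
    unfolding set_integrable_def using integrable_completion by blast
qed

lemma set_integrable_continuous_Icc:
  fixes f :: "real \<Rightarrow> real"
  assumes "continuous_on {c..d} f"
  shows "set_integrable lborel {c..d} f"
  unfolding set_integrable_def using assms by (intro borel_integrable_compact) auto

lemma lborel_integral_indicator_Icc:
  fixes f :: "real \<Rightarrow> real"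
  assumes "set_integrable lborel {c..d} f"
  shows "integrable lborel (\<lambda>x. indicator {c..d} x * f x)"
    and "(\<integral>x. indicator {c..d} x * f x \<partial>lborel) = integral {c..d} f"
  using assms set_borel_integral_eq_integral(2)[OF assms]
  unfolding set_integrable_def set_lebesgue_integral_def by simp_all

text \<open>Extending continuous functions on \<open>[a, b]\<close> to constant functions outside makes them
  Borel measurable on the real line, as needed for the Fubini theorem on \<open>lborel \<Otimes>\<^sub>M lborel\<close>.\<close>
lemma continuous_clamp_borel_measurable:
  fixes g :: "real \<Rightarrow> real"
  assumes "continuous_on {a..b} g" "a \<le> b"
  shows "(\<lambda>x. g (max a (min b x))) \<in> borel_measurable borel"
    and "\<And>x. x \<in> {a..b} \<Longrightarrow> g (max a (min b x)) = g x"
    and "continuous_on UNIV (\<lambda>x. g (max a (min b x)))"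
proof -
  show "continuous_on UNIV (\<lambda>x. g (max a (min b x)))"
    by (rule continuous_on_compose2[OF assms(1)]) (use assms in \<open>auto intro!: continuous_intros\<close>)
  then show "(\<lambda>x. g (max a (min b x))) \<in> borel_measurable borel"
    by (rule borel_measurable_continuous_onI)
qed auto

section \<open>The Katugampola kernel\<close>

definition kat_kernel :: "real \<Rightarrow> real \<Rightarrow> real \<Rightarrow> real \<Rightarrow> real" where
  "kat_kernel al r t \<tau> = (t powr r - \<tau> powr r) powr (- al)"

lemma kat_kernel_nonneg: "0 \<le> kat_kernel al r t \<tau>"
  unfolding kat_kernel_def by simp

text \<open>Since \<open>0 powr x = 0\<close>, the kernel is \<open>0\<close> (rather than infinite) on the diagonal.\<close>
lemma kat_kernel_diag [simp]: "kat_kernel al r t t = 0"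
  unfolding kat_kernel_def by simp

lemma kat_kernel_measurable_lebesgue_on:
  shows "(\<lambda>\<tau>. kat_kernel al r t \<tau>) \<in> borel_measurable (lebesgue_on S)"
    and "(\<lambda>t. kat_kernel al r t \<tau>) \<in> borel_measurable (lebesgue_on S)"
  by (rule borel_measurable_lebesgue_on_of_borel, simp add: kat_kernel_def)+

lemma kat_kernel_bound:
  fixes a b r1 r2 al :: real
  assumes "0 < a" "a \<le> b" "0 < r1" "0 < al"
  obtains M where "0 \<le> M"
    "\<And>r t \<tau>. r1 \<le> r \<Longrightarrow> r \<le> r2 \<Longrightarrow> a \<le> \<tau> \<Longrightarrow> \<tau> \<le> t \<Longrightarrow> t \<le> b \<Longrightarrow>
       kat_kernel al r t \<tau> \<le> M * (t - \<tau>) powr (- al)"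
proof -
  obtain m where m: "0 < m"
    "\<And>r t \<tau>. r1 \<le> r \<Longrightarrow> r \<le> r2 \<Longrightarrow> a \<le> \<tau> \<Longrightarrow> \<tau> \<le> t \<Longrightarrow> t \<le> b \<Longrightarrow>
       m * (t - \<tau>) \<le> t powr r - \<tau> powr r"
    using powr_diff_ge_linear[OF assms(1-3)] by blast
  have "kat_kernel al r t \<tau> \<le> m powr (- al) * (t - \<tau>) powr (- al)"
    if "r1 \<le> r" "r \<le> r2" "a \<le> \<tau>" "\<tau> \<le> t" "t \<le> b" for r t \<tau>
  proof (cases "\<tau> = t")
    case False
    then have "0 < m * (t - \<tau>)" using m(1) that by simp
    then have "(t powr r - \<tau> powr r) powr (- al) \<le> (m * (t - \<tau>)) powr (- al)"
      using m(2)[OF that] assms by (intro powr_mono2') auto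
    then show ?thesis using m(1) that unfolding kat_kernel_def by (simp add: powr_mult)
  qed simp
  then show ?thesis using that[of "m powr (- al)"] by simp
qed

lemma has_real_derivative_kat_kernel_order:
  fixes al r t \<tau> :: real
  assumes "0 < \<tau>" "\<tau> < t" "0 < r"
  shows "((\<lambda>r. kat_kernel al r t \<tau>) has_real_derivative
           - al * (t powr r - \<tau> powr r) powr (- al - 1) * (t powr r * ln t - \<tau> powr r * ln \<tau>)) (at r)"
proof -
  let ?D = "t powr r - \<tau> powr r"
  have D: "0 < ?D" using assms by (simp add: powr_less_mono2)
  have "((\<lambda>r. t powr r - \<tau> powr r) has_real_derivative t powr r * ln t - \<tau> powr r * ln \<tau>) (at r)"
    using assms by (auto intro!: derivative_eq_intros)
  from DERIV_powr[OF this D DERIV_const[of "- al"]]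
  have "((\<lambda>r. kat_kernel al r t \<tau>) has_real_derivative
      ?D powr (- al) * ((t powr r * ln t - \<tau> powr r * ln \<tau>) * (- al) / ?D)) (at r)"
    unfolding kat_kernel_def by simp
  moreover have "?D powr (- al) * ((t powr r * ln t - \<tau> powr r * ln \<tau>) * (- al) / ?D)
      = - al * (?D powr (- al) / ?D) * (t powr r * ln t - \<tau> powr r * ln \<tau>)"
    by (simp add: mult_ac)
  moreover have "?D powr (- al) / ?D = ?D powr (- al - 1)"
    using D by (simp add: powr_diff)
  ultimately show ?thesis by simp
qed

lemma kat_kernel_order_derivative_bound:
  fixes a b r1 r2 al :: real
  assumes "0 < a" "a \<le> b" "0 < r1" "0 < al"
  obtains C where "0 \<le> C"
    "\<And>r t \<tau>. r1 \<le> r \<Longrightarrow> r \<le> r2 \<Longrightarrow> a \<le> \<tau> \<Longrightarrow> \<tau> < t \<Longrightarrow> t \<le> b \<Longrightarrow>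
       \<bar>al * (t powr r - \<tau> powr r) powr (- al - 1) * (t powr r * ln t - \<tau> powr r * ln \<tau>)\<bar>
         \<le> C * (t - \<tau>) powr (- al)"
proof -
  obtain m where m: "0 < m"
    "\<And>r t \<tau>. r1 \<le> r \<Longrightarrow> r \<le> r2 \<Longrightarrow> a \<le> \<tau> \<Longrightarrow> \<tau> \<le> t \<Longrightarrow> t \<le> b \<Longrightarrow>
       m * (t - \<tau>) \<le> t powr r - \<tau> powr r"
    using powr_diff_ge_linear[OF assms(1-3)] by blast
  obtain M where M: "0 \<le> M"
    "\<And>r t \<tau>. r1 \<le> r \<Longrightarrow> r \<le> r2 \<Longrightarrow> a \<le> \<tau> \<Longrightarrow> \<tau> \<le> t \<Longrightarrow> t \<le> b \<Longrightarrow>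
       kat_kernel al r t \<tau> \<le> M * (t - \<tau>) powr (- al)"
    using kat_kernel_bound[OF assms] by blast
  define \<Lambda> where "\<Lambda> = max \<bar>ln a\<bar> \<bar>ln b\<bar> + max 1 (b powr r2) / (a * m)"
  have \<Lambda>: "0 \<le> \<Lambda>" using assms m unfolding \<Lambda>_def by simp
  have "\<bar>al * (t powr r - \<tau> powr r) powr (- al - 1) * (t powr r * ln t - \<tau> powr r * ln \<tau>)\<bar>
      \<le> (al * M * \<Lambda>) * (t - \<tau>) powr (- al)"
    if r: "r1 \<le> r" "r \<le> r2" and t: "a \<le> \<tau>" "\<tau> < t" "t \<le> b" for r t \<tau>
  proof -
    define D where "D = t powr r - \<tau> powr r"
    have "0 < m * (t - \<tau>)" using m(1) t by simp
    then have D: "0 < D" using m(2)[OF r t(1) _ t(3)] t unfolding D_def by linarith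
    have num: "\<bar>t powr r * ln t - \<tau> powr r * ln \<tau>\<bar> \<le> D * \<Lambda>"
      unfolding D_def \<Lambda>_def using assms r t m
      by (intro abs_powr_ln_diff_le_powr_diff) auto
    have "\<bar>al * D powr (- al - 1) * (t powr r * ln t - \<tau> powr r * ln \<tau>)\<bar> \<le> al * D powr (- al - 1) * (D * \<Lambda>)"
      using num assms by (simp add: abs_mult mult_left_mono)
    also have "\<dots> = al * kat_kernel al r t \<tau> * \<Lambda>"
      using D unfolding kat_kernel_def D_def[symmetric] by (simp add: powr_diff)
    also have "\<dots> \<le> al * (M * (t - \<tau>) powr (- al)) * \<Lambda>"
      using M(2)[OF r t(1) _ t(3)] t assms \<Lambda> by (intro mult_right_mono mult_left_mono) auto
    finally show ?thesis unfolding D_def by (simp add: mult_ac)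
  qed
  then show ?thesis using that[of "al * M * \<Lambda>"] assms M \<Lambda> by simp
qed

lemma kat_kernel_order_lipschitz:
  fixes a b r1 r2 al :: real
  assumes "0 < a" "a \<le> b" "0 < r1" "0 < al"
  obtains C where "0 \<le> C"
    "\<And>r r' t \<tau>. r1 \<le> r \<Longrightarrow> r \<le> r2 \<Longrightarrow> r1 \<le> r' \<Longrightarrow> r' \<le> r2 \<Longrightarrow> a \<le> \<tau> \<Longrightarrow> \<tau> \<le> t \<Longrightarrow> t \<le> b \<Longrightarrow>
       \<bar>kat_kernel al r t \<tau> - kat_kernel al r' t \<tau>\<bar> \<le> C * (t - \<tau>) powr (- al) * \<bar>r - r'\<bar>"
proof -
  obtain C where C: "0 \<le> C"
    "\<And>r t \<tau>. r1 \<le> r \<Longrightarrow> r \<le> r2 \<Longrightarrow> a \<le> \<tau> \<Longrightarrow> \<tau> < t \<Longrightarrow> t \<le> b \<Longrightarrow>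
       \<bar>al * (t powr r - \<tau> powr r) powr (- al - 1) * (t powr r * ln t - \<tau> powr r * ln \<tau>)\<bar>
         \<le> C * (t - \<tau>) powr (- al)"
    using kat_kernel_order_derivative_bound[OF assms] by blast
  have "\<bar>kat_kernel al r t \<tau> - kat_kernel al r' t \<tau>\<bar> \<le> C * (t - \<tau>) powr (- al) * \<bar>r - r'\<bar>"
    if r: "r1 \<le> r" "r \<le> r2" "r1 \<le> r'" "r' \<le> r2" and t: "a \<le> \<tau>" "\<tau> \<le> t" "t \<le> b" for r r' t \<tau>
  proof (cases "\<tau> = t")
    case False
    have "norm (kat_kernel al r t \<tau> - kat_kernel al r' t \<tau>) \<le> C * (t - \<tau>) powr (- al) * norm (r - r')"
    proof (rule field_differentiable_bound[where S = "{r1..r2}"])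
      fix z assume z: "z \<in> {r1..r2}"
      show "((\<lambda>r. kat_kernel al r t \<tau>) has_field_derivative
          - al * (t powr z - \<tau> powr z) powr (- al - 1) * (t powr z * ln t - \<tau> powr z * ln \<tau>)) (at z within {r1..r2})"
      proof (rule has_field_derivative_at_within, rule has_real_derivative_kat_kernel_order)
        show "0 < \<tau>" "\<tau> < t" "0 < z" using z assms t False by auto
      qed
      show "norm (- al * (t powr z - \<tau> powr z) powr (- al - 1) * (t powr z * ln t - \<tau> powr z * ln \<tau>))
          \<le> C * (t - \<tau>) powr (- al)"
        using C(2)[of z \<tau> t] z t False by simp
    qed (use r in auto)
    then show ?thesis by simp
  qed simp
  then show ?thesis using that C(1) by blast
qed

lemma kat_kernel_times_absolutely_integrable:
  fixes a b s t r al :: real and g :: "real \<Rightarrow> real"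
  assumes ab: "0 < a" "a \<le> s" "s \<le> t" "t \<le> b" and al: "0 < al" "al < 1" and r: "0 < r"
    and g: "continuous_on {a..b} g"
  shows "(\<lambda>\<tau>. kat_kernel al r t \<tau> * g \<tau>) absolutely_integrable_on {s..t}"
    and "(\<lambda>t'. kat_kernel al r t' s * g t') absolutely_integrable_on {s..t}"
proof -
  obtain M where M: "0 \<le> M"
    "\<And>r' t \<tau>. r \<le> r' \<Longrightarrow> r' \<le> r \<Longrightarrow> a \<le> \<tau> \<Longrightarrow> \<tau> \<le> t \<Longrightarrow> t \<le> b \<Longrightarrow>
       kat_kernel al r' t \<tau> \<le> M * (t - \<tau>) powr (- al)"
    using kat_kernel_bound[of a b r al r] ab al r by auto
  obtain G where G: "0 \<le> G" "\<And>\<tau>. \<tau> \<in> {a..b} \<Longrightarrow> \<bar>g \<tau>\<bar> \<le> G"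
    using continuous_on_compact_bound[OF compact_Icc g] by auto
  have gm: "g \<in> borel_measurable (lebesgue_on {s..t})"
    using ab by (intro continuous_imp_measurable_on_sets_lebesgue continuous_on_subset[OF g]) auto
  have "(\<lambda>\<tau>. G * M * (t - \<tau>) powr (- al)) integrable_on {s..t}"
    using has_integral_powr_shift_left[OF al(2) ab(3)] has_integral_mult_right by blast
  moreover have "norm (kat_kernel al r t \<tau> * g \<tau>) \<le> G * M * (t - \<tau>) powr (- al)" if "\<tau> \<in> {s..t}" for \<tau>
    using mult_mono[OF M(2)[of r \<tau> t] G(2)[of \<tau>]] that ab M(1) kat_kernel_nonneg[of al r t \<tau>]
    by (simp add: abs_mult mult_ac)
  ultimately show "(\<lambda>\<tau>. kat_kernel al r t \<tau> * g \<tau>) absolutely_integrable_on {s..t}"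
    by (intro measurable_bounded_by_integrable_imp_absolutely_integrable
        borel_measurable_times kat_kernel_measurable_lebesgue_on gm) auto
  have "(\<lambda>t'. G * M * (t' - s) powr (- al)) integrable_on {s..t}"
    using has_integral_powr_shift_right[OF al(2) ab(3)] has_integral_mult_right by blast
  moreover have "norm (kat_kernel al r t' s * g t') \<le> G * M * (t' - s) powr (- al)" if "t' \<in> {s..t}" for t'
    using mult_mono[OF M(2)[of r s t'] G(2)[of t']] that ab M(1) kat_kernel_nonneg[of al r t' s]
    by (simp add: abs_mult mult_ac)
  ultimately show "(\<lambda>t'. kat_kernel al r t' s * g t') absolutely_integrable_on {s..t}"
    by (intro measurable_bounded_by_integrable_imp_absolutely_integrable
        borel_measurable_times kat_kernel_measurable_lebesgue_on gm) auto
qed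

lemma tendsto_kat_kernel_rescaled:
  fixes a b r al t0 s :: real and g :: "real \<Rightarrow> real"
  assumes ab: "0 < a" "a < t0" "t0 \<le> b" and r: "0 < r" and g: "continuous_on {a..b} g"
    and s: "s \<in> {0..1}"
  shows "((\<lambda>t. kat_kernel al r t (a + (t - a) * s) * g (a + (t - a) * s)) \<longlongrightarrow>
           kat_kernel al r t0 (a + (t0 - a) * s) * g (a + (t0 - a) * s)) (at t0 within {a..b})"
proof (cases "s = 1")
  case False
  let ?\<tau> = "\<lambda>t. a + (t - a) * s"
  have lt: "(t0 - a) * s < t0 - a" using mult_strict_left_mono[of s 1 "t0 - a"] ab s False by simp
  have "a \<le> ?\<tau> t0" "?\<tau> t0 \<le> t0" using mem_Icc_affine_unit[of a t0 s] ab s by auto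
  then have "0 < ?\<tau> t0" "?\<tau> t0 < t0" "?\<tau> t0 \<in> {a..b}" using lt ab by (simp_all, linarith+)
  then have "?\<tau> t0 powr r < t0 powr r" using r by (intro powr_less_mono2) auto
  then have "t0 powr r - ?\<tau> t0 powr r \<noteq> 0" by simp
  then have "((\<lambda>t. kat_kernel al r t (?\<tau> t)) \<longlongrightarrow> kat_kernel al r t0 (?\<tau> t0)) (at t0 within {a..b})"
    unfolding kat_kernel_def using \<open>0 < ?\<tau> t0\<close> ab by (intro tendsto_intros tendsto_powr) auto
  moreover have "((\<lambda>t. g (?\<tau> t)) \<longlongrightarrow> g (?\<tau> t0)) (at t0 within {a..b})"
  proof (rule continuous_on_tendsto_compose[OF g _ \<open>?\<tau> t0 \<in> {a..b}\<close>])
    show "(?\<tau> \<longlongrightarrow> ?\<tau> t0) (at t0 within {a..b})" by (intro tendsto_intros)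
    have "\<forall>\<^sub>F t in at t0 within {a..b}. t \<in> {a..b}" by (simp add: eventually_at_filter)
    then show "\<forall>\<^sub>F t in at t0 within {a..b}. ?\<tau> t \<in> {a..b}"
      by eventually_elim (use mem_Icc_affine_unit s in force)
  qed
  ultimately show ?thesis by (rule tendsto_mult)
qed simp

section \<open>The left Katugampola integral\<close>

definition kat_left_int :: "real \<Rightarrow> real \<Rightarrow> real \<Rightarrow> (real \<Rightarrow> real) \<Rightarrow> real \<Rightarrow> real" where
  "kat_left_int a al r g t = integral {a..t} (\<lambda>\<tau>. kat_kernel al r t \<tau> * g \<tau>)"

lemma abs_kat_left_int_le:
  fixes a t r al G M :: real and g :: "real \<Rightarrow> real"
  assumes "a \<le> t" "al < 1"
    and int: "(\<lambda>\<tau>. kat_kernel al r t \<tau> * g \<tau>) integrable_on {a..t}"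
    and G: "\<And>\<tau>. \<tau> \<in> {a..t} \<Longrightarrow> \<bar>g \<tau>\<bar> \<le> G"
    and M: "\<And>\<tau>. \<tau> \<in> {a..t} \<Longrightarrow> kat_kernel al r t \<tau> \<le> M * (t - \<tau>) powr (- al)"
  shows "\<bar>kat_left_int a al r g t\<bar> \<le> G * M * ((t - a) powr (1 - al) / (1 - al))"
  unfolding kat_left_int_def
proof (rule abs_integral_le_singular_powr[OF assms(1-3)])
  fix \<tau> assume \<tau>: "\<tau> \<in> {a..t}"
  have "kat_kernel al r t \<tau> * \<bar>g \<tau>\<bar> \<le> M * (t - \<tau>) powr (- al) * G"
    using G[OF \<tau>] M[OF \<tau>] kat_kernel_nonneg[of al r t \<tau>] by (intro mult_mono) auto
  then show "\<bar>kat_kernel al r t \<tau> * g \<tau>\<bar> \<le> G * M * (t - \<tau>) powr (- al)"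
    using kat_kernel_nonneg[of al r t \<tau>] by (simp add: abs_mult mult_ac)
qed

lemma kat_left_int_bound:
  fixes a b r1 r2 al :: real
  assumes "0 < a" "a \<le> b" "0 < al" "al < 1" "0 < r1"
  obtains B where "0 \<le> B"
    "\<And>g G r t. continuous_on {a..b} g \<Longrightarrow> (\<And>\<tau>. \<tau> \<in> {a..b} \<Longrightarrow> \<bar>g \<tau>\<bar> \<le> G) \<Longrightarrow>
       r1 \<le> r \<Longrightarrow> r \<le> r2 \<Longrightarrow> t \<in> {a..b} \<Longrightarrow> \<bar>kat_left_int a al r g t\<bar> \<le> B * G"
proof -
  obtain M where M: "0 \<le> M"
    "\<And>r t \<tau>. r1 \<le> r \<Longrightarrow> r \<le> r2 \<Longrightarrow> a \<le> \<tau> \<Longrightarrow> \<tau> \<le> t \<Longrightarrow> t \<le> b \<Longrightarrow>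
       kat_kernel al r t \<tau> \<le> M * (t - \<tau>) powr (- al)"
    using kat_kernel_bound[of a b r1 al r2] assms by auto
  define B where "B = M * ((b - a) powr (1 - al) / (1 - al))"
  have "\<bar>kat_left_int a al r g t\<bar> \<le> B * G"
    if g: "continuous_on {a..b} g" and G: "\<And>\<tau>. \<tau> \<in> {a..b} \<Longrightarrow> \<bar>g \<tau>\<bar> \<le> G"
      and r: "r1 \<le> r" "r \<le> r2" and t: "t \<in> {a..b}" for g G r t
  proof -
    have "0 \<le> G" using G[of a] assms by simp
    have "\<bar>kat_left_int a al r g t\<bar> \<le> G * M * ((t - a) powr (1 - al) / (1 - al))"
    proof (rule abs_kat_left_int_le)
      show "(\<lambda>\<tau>. kat_kernel al r t \<tau> * g \<tau>) integrable_on {a..t}"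
        using kat_kernel_times_absolutely_integrable(1)[OF _ _ _ _ _ _ _ g] assms r t
        by (simp add: absolutely_integrable_on_def)
    qed (use assms G M(2) r t in auto)
    also have "\<dots> \<le> G * M * ((b - a) powr (1 - al) / (1 - al))"
      using t assms \<open>0 \<le> G\<close> M(1)
      by (intro mult_left_mono divide_right_mono powr_mono2) auto
    finally show ?thesis unfolding B_def by (simp add: mult_ac)
  qed
  moreover have "0 \<le> B" unfolding B_def using M(1) assms by simp
  ultimately show ?thesis using that by blast
qed

lemma kat_left_int_tendsto_left_endpoint:
  fixes a b r al :: real and g :: "real \<Rightarrow> real"
  assumes "0 < a" "a \<le> b" "0 < al" "al < 1" "0 < r" "continuous_on {a..b} g"
  shows "(kat_left_int a al r g \<longlongrightarrow> 0) (at a within {a..b})"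
proof -
  obtain M where M: "0 \<le> M"
    "\<And>r' t \<tau>. r \<le> r' \<Longrightarrow> r' \<le> r \<Longrightarrow> a \<le> \<tau> \<Longrightarrow> \<tau> \<le> t \<Longrightarrow> t \<le> b \<Longrightarrow>
       kat_kernel al r' t \<tau> \<le> M * (t - \<tau>) powr (- al)"
    using kat_kernel_bound[of a b r al r] assms by auto
  obtain G where G: "0 \<le> G" "\<And>\<tau>. \<tau> \<in> {a..b} \<Longrightarrow> \<bar>g \<tau>\<bar> \<le> G"
    using continuous_on_compact_bound[OF compact_Icc assms(6)] by auto
  have "\<forall>\<^sub>F t in at a within {a..b}. t \<in> {a..b}"
    by (simp add: eventually_at_filter)
  then have "\<forall>\<^sub>F t in at a within {a..b}.
      norm (kat_left_int a al r g t) \<le> G * M * ((t - a) powr (1 - al) / (1 - al))"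
  proof eventually_elim
    case (elim t)
    show ?case
    unfolding real_norm_def
    proof (rule abs_kat_left_int_le)
      show "(\<lambda>\<tau>. kat_kernel al r t \<tau> * g \<tau>) integrable_on {a..t}"
        using kat_kernel_times_absolutely_integrable(1)[OF _ _ _ _ _ _ _ assms(6)] assms elim
        by (simp add: absolutely_integrable_on_def)
      show "\<bar>g \<tau>\<bar> \<le> G" if "\<tau> \<in> {a..t}" for \<tau> using G(2) that elim by simp
      show "kat_kernel al r t \<tau> \<le> M * (t - \<tau>) powr (- al)" if "\<tau> \<in> {a..t}" for \<tau>
        using M(2)[of r \<tau> t] that elim by simp
    qed (use assms elim in simp_all)
  qed
  moreover have "((\<lambda>t. G * M * ((t - a) powr (1 - al) / (1 - al))) \<longlongrightarrow>
      G * M * ((a - a) powr (1 - al) / (1 - al))) (at a within {a..b})"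
    using assms by (intro tendsto_intros tendsto_powr') (auto simp: eventually_at_filter)
  ultimately show ?thesis
    using assms by (auto intro: Lim_null_comparison)
qed

text \<open>Away from \<open>a\<close>, continuity follows by dominated convergence after rescaling \<open>[a, t]\<close>
  to \<open>[0, 1]\<close>, which moves the singularity of the kernel to the fixed point \<open>s = 1\<close>.\<close>
lemma kat_left_int_tendsto_interior:
  fixes a b r al t0 :: real and g :: "real \<Rightarrow> real"
  assumes ab: "0 < a" "a < t0" "t0 \<le> b" and al: "0 < al" "al < 1" and r: "0 < r"
    and g: "continuous_on {a..b} g"
  shows "(kat_left_int a al r g \<longlongrightarrow> kat_left_int a al r g t0) (at t0 within {a..b})"
proof -
  obtain M where M: "0 \<le> M"
    "\<And>r' t \<tau>. r \<le> r' \<Longrightarrow> r' \<le> r \<Longrightarrow> a \<le> \<tau> \<Longrightarrow> \<tau> \<le> t \<Longrightarrow> t \<le> b \<Longrightarrow>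
       kat_kernel al r' t \<tau> \<le> M * (t - \<tau>) powr (- al)"
    using kat_kernel_bound[of a b r al r] ab al r by auto
  obtain G where G: "0 \<le> G" "\<And>\<tau>. \<tau> \<in> {a..b} \<Longrightarrow> \<bar>g \<tau>\<bar> \<le> G"
    using continuous_on_compact_bound[OF compact_Icc g] by auto
  define c where "c = (a + t0) / 2"
  have c: "a < c" "c < t0" using ab unfolding c_def by auto
  define F where "F t s = kat_kernel al r t (a + (t - a) * s) * g (a + (t - a) * s)" for t s
  define h where "h s = G * M * (c - a) powr (- al) * (1 - s) powr (- al)" for s
  have rescaled: "kat_left_int a al r g t = (t - a) * integral {0..1} (F t) \<and> F t integrable_on {0..1}"
    if "t \<in> {a..b}" "c < t" for t
    using integral_rescale_unit_interval[of a t "\<lambda>\<tau>. kat_kernel al r t \<tau> * g \<tau>"] that c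
      kat_kernel_times_absolutely_integrable(1)[of a a t b al r g] ab al r g
    unfolding F_def kat_left_int_def by (auto simp: absolutely_integrable_on_def)
  have "h integrable_on {0..1}"
    using has_integral_mult_right[OF has_integral_powr_shift_left[of al 0 1], of "G * M * (c - a) powr (- al)"] al
    unfolding h_def by (auto dest: has_integral_integrable)
  moreover have "\<bar>F t s\<bar> \<le> h s" if "t \<in> {a..b}" "c < t" "s \<in> {0..1}" for t s
  proof (cases "s = 1")
    case False
    let ?\<tau> = "a + (t - a) * s"
    have \<tau>: "?\<tau> \<in> {a..t}" using mem_Icc_affine_unit that by simp
    have "\<bar>F t s\<bar> = kat_kernel al r t ?\<tau> * \<bar>g ?\<tau>\<bar>"
      unfolding F_def by (simp add: abs_mult kat_kernel_nonneg)
    also have "\<dots> \<le> M * (t - ?\<tau>) powr (- al) * G"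
      using M(2)[of r ?\<tau> t] G(2)[of ?\<tau>] \<tau> that M(1) kat_kernel_nonneg by (intro mult_mono) auto
    also have "t - ?\<tau> = (t - a) * (1 - s)" by (simp add: algebra_simps)
    also have "((t - a) * (1 - s)) powr (- al) = (t - a) powr (- al) * (1 - s) powr (- al)"
      using that c by (simp add: powr_mult)
    also have "M * ((t - a) powr (- al) * (1 - s) powr (- al)) * G
        \<le> M * ((c - a) powr (- al) * (1 - s) powr (- al)) * G"
      using that c al M(1) G(1) by (intro mult_right_mono mult_left_mono powr_mono2') auto
    finally show ?thesis unfolding h_def by (simp add: mult_ac)
  qed (simp add: F_def h_def)
  moreover have "((\<lambda>t. F t s) \<longlongrightarrow> F t0 s) (at t0 within {a..b})" if "s \<in> {0..1}" for s
    unfolding F_def using tendsto_kat_kernel_rescaled[OF ab r g that] .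
  moreover have "\<forall>\<^sub>F t in at t0 within {a..b}. t \<in> {a..b} \<and> c < t"
  proof -
    have "\<forall>\<^sub>F t in at t0 within {a..b}. c < t" using order_tendstoD(1)[OF tendsto_ident_at c(2)] .
    moreover have "\<forall>\<^sub>F t in at t0 within {a..b}. t \<in> {a..b}" by (simp add: eventually_at_filter)
    ultimately show ?thesis by eventually_elim simp
  qed
  ultimately have "((\<lambda>t. integral {0..1} (F t)) \<longlongrightarrow> integral {0..1} (F t0)) (at t0 within {a..b})"
    using rescaled by (intro integral_tendsto_dominated) (auto elim!: eventually_mono)
  then have "((\<lambda>t. (t - a) * integral {0..1} (F t)) \<longlongrightarrow> (t0 - a) * integral {0..1} (F t0))
      (at t0 within {a..b})"
    by (intro tendsto_intros)
  moreover have "\<forall>\<^sub>F t in at t0 within {a..b}. (t - a) * integral {0..1} (F t) = kat_left_int a al r g t"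
    using \<open>\<forall>\<^sub>F t in at t0 within {a..b}. t \<in> {a..b} \<and> c < t\<close> rescaled by (auto elim!: eventually_mono)
  ultimately show ?thesis
    using rescaled[of t0] ab c by (simp add: Lim_transform_eventually)
qed

lemma kat_left_int_continuous_on:
  fixes a b r al :: real and g :: "real \<Rightarrow> real"
  assumes "0 < a" "a \<le> b" "0 < al" "al < 1" "0 < r" "continuous_on {a..b} g"
  shows "continuous_on {a..b} (kat_left_int a al r g)"
  unfolding continuous_on_def
proof
  fix t0 assume t0: "t0 \<in> {a..b}"
  show "(kat_left_int a al r g \<longlongrightarrow> kat_left_int a al r g t0) (at t0 within {a..b})"
  proof (cases "t0 = a")
    case True
    then show ?thesis
      using kat_left_int_tendsto_left_endpoint[OF assms] by (simp add: kat_left_int_def)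
  next
    case False
    then show ?thesis using kat_left_int_tendsto_interior assms t0 by simp
  qed
qed

lemma kat_left_int_order_lipschitz:
  fixes a b r1 r2 al :: real
  assumes "0 < a" "a \<le> b" "0 < al" "al < 1" "0 < r1"
  obtains C where "0 \<le> C"
    "\<And>g G r r' t. continuous_on {a..b} g \<Longrightarrow> (\<And>\<tau>. \<tau> \<in> {a..b} \<Longrightarrow> \<bar>g \<tau>\<bar> \<le> G) \<Longrightarrow>
       r1 \<le> r \<Longrightarrow> r \<le> r2 \<Longrightarrow> r1 \<le> r' \<Longrightarrow> r' \<le> r2 \<Longrightarrow> t \<in> {a..b} \<Longrightarrow>
       \<bar>kat_left_int a al r g t - kat_left_int a al r' g t\<bar> \<le> C * G * \<bar>r - r'\<bar>"
proof -
  obtain C where C: "0 \<le> C"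
    "\<And>r r' t \<tau>. r1 \<le> r \<Longrightarrow> r \<le> r2 \<Longrightarrow> r1 \<le> r' \<Longrightarrow> r' \<le> r2 \<Longrightarrow> a \<le> \<tau> \<Longrightarrow> \<tau> \<le> t \<Longrightarrow> t \<le> b \<Longrightarrow>
       \<bar>kat_kernel al r t \<tau> - kat_kernel al r' t \<tau>\<bar> \<le> C * (t - \<tau>) powr (- al) * \<bar>r - r'\<bar>"
    using kat_kernel_order_lipschitz[of a b r1 al r2] assms by auto
  define W where "W = (b - a) powr (1 - al) / (1 - al)"
  have "\<bar>kat_left_int a al r g t - kat_left_int a al r' g t\<bar> \<le> (C * W) * G * \<bar>r - r'\<bar>"
    if g: "continuous_on {a..b} g" and G: "\<And>\<tau>. \<tau> \<in> {a..b} \<Longrightarrow> \<bar>g \<tau>\<bar> \<le> G"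
      and r: "r1 \<le> r" "r \<le> r2" "r1 \<le> r'" "r' \<le> r2" and t: "t \<in> {a..b}" for g G r r' t
  proof -
    have int: "(\<lambda>\<tau>. kat_kernel al \<rho> t \<tau> * g \<tau>) integrable_on {a..t}" if "r1 \<le> \<rho>" for \<rho>
      using kat_kernel_times_absolutely_integrable(1)[OF _ _ _ _ _ _ _ g] assms that t
      by (simp add: absolutely_integrable_on_def)
    have "0 \<le> G" using G[of a] assms by simp
    have "\<bar>kat_left_int a al r g t - kat_left_int a al r' g t\<bar>
        = \<bar>integral {a..t} (\<lambda>\<tau>. (kat_kernel al r t \<tau> - kat_kernel al r' t \<tau>) * g \<tau>)\<bar>"
      unfolding kat_left_int_def left_diff_distrib
      using int[of r] int[of r'] r by (simp add: integral_diff)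
    also have "\<dots> \<le> C * G * \<bar>r - r'\<bar> * ((t - a) powr (1 - al) / (1 - al))"
    proof (rule abs_integral_le_singular_powr)
      show "(\<lambda>\<tau>. (kat_kernel al r t \<tau> - kat_kernel al r' t \<tau>) * g \<tau>) integrable_on {a..t}"
        unfolding left_diff_distrib using int[of r] int[of r'] r by (intro integrable_diff) auto
      fix \<tau> assume \<tau>: "\<tau> \<in> {a..t}"
      have "\<bar>kat_kernel al r t \<tau> - kat_kernel al r' t \<tau>\<bar> * \<bar>g \<tau>\<bar> \<le> C * (t - \<tau>) powr (- al) * \<bar>r - r'\<bar> * G"
        using C(1) C(2)[OF r, of \<tau> t] G[of \<tau>] \<tau> t by (intro mult_mono) auto
      then show "\<bar>(kat_kernel al r t \<tau> - kat_kernel al r' t \<tau>) * g \<tau>\<bar> \<le> C * G * \<bar>r - r'\<bar> * (t - \<tau>) powr (- al)"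
        by (simp add: abs_mult mult_ac)
    qed (use assms t in auto)
    also have "\<dots> \<le> C * G * \<bar>r - r'\<bar> * W"
      unfolding W_def using t assms C(1) \<open>0 \<le> G\<close>
      by (intro mult_left_mono divide_right_mono powr_mono2) auto
    finally show ?thesis by (simp add: mult_ac)
  qed
  moreover have "0 \<le> C * W" unfolding W_def using C(1) assms by simp
  ultimately show ?thesis using that by blast
qed

lemma kat_left_int_differentiable_order:
  fixes a b t r0 al :: real and g :: "real \<Rightarrow> real"
  assumes ab: "0 < a" "a \<le> t" "t \<le> b" and al: "0 < al" "al < 1" and r0: "0 < r0"
    and g: "continuous_on {a..b} g"
  shows "(\<lambda>r. kat_left_int a al r g t) differentiable (at r0)"
proof -
  obtain C where C: "0 \<le> C"
    "\<And>r r' t \<tau>. r0 / 2 \<le> r \<Longrightarrow> r \<le> 2 * r0 \<Longrightarrow> r0 / 2 \<le> r' \<Longrightarrow> r' \<le> 2 * r0 \<Longrightarrow>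
       a \<le> \<tau> \<Longrightarrow> \<tau> \<le> t \<Longrightarrow> t \<le> b \<Longrightarrow>
       \<bar>kat_kernel al r t \<tau> - kat_kernel al r' t \<tau>\<bar> \<le> C * (t - \<tau>) powr (- al) * \<bar>r - r'\<bar>"
    using kat_kernel_order_lipschitz[of a b "r0 / 2" al "2 * r0"] ab al r0 by auto
  obtain G where G: "0 \<le> G" "\<And>\<tau>. \<tau> \<in> {a..b} \<Longrightarrow> \<bar>g \<tau>\<bar> \<le> G"
    using continuous_on_compact_bound[OF compact_Icc g] by auto
  define D where "D \<tau> = (if \<tau> < t then - al * (t powr r0 - \<tau> powr r0) powr (- al - 1) *
      (t powr r0 * ln t - \<tau> powr r0 * ln \<tau>) else 0) * g \<tau>" for \<tau>
  have "((\<lambda>r. integral {a..t} (\<lambda>\<tau>. kat_kernel al r t \<tau> * g \<tau>)) has_real_derivative integral {a..t} D) (at r0)"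
  proof (rule has_real_derivative_integral_dominated)
    have "\<forall>\<^sub>F r in nhds r0. r \<in> {r0 / 2 <..< 2 * r0}"
      using r0 by (intro eventually_nhds_in_open) auto
    then show "\<forall>\<^sub>F r in nhds r0. (\<lambda>\<tau>. kat_kernel al r t \<tau> * g \<tau>) integrable_on {a..t} \<and>
        (\<forall>\<tau>\<in>{a..t}. \<bar>kat_kernel al r t \<tau> * g \<tau> - kat_kernel al r0 t \<tau> * g \<tau>\<bar>
           \<le> C * G * (t - \<tau>) powr (- al) * \<bar>r - r0\<bar>)"
    proof eventually_elim
      case (elim r)
      have "\<bar>kat_kernel al r t \<tau> * g \<tau> - kat_kernel al r0 t \<tau> * g \<tau>\<bar> \<le> C * G * (t - \<tau>) powr (- al) * \<bar>r - r0\<bar>"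
        if "\<tau> \<in> {a..t}" for \<tau>
      proof -
        have "\<bar>kat_kernel al r t \<tau> - kat_kernel al r0 t \<tau>\<bar> * \<bar>g \<tau>\<bar> \<le> C * (t - \<tau>) powr (- al) * \<bar>r - r0\<bar> * G"
          using C(2)[of r r0 \<tau> t] G(2)[of \<tau>] C(1) elim that ab r0 by (intro mult_mono) auto
        then show ?thesis
          unfolding left_diff_distrib[symmetric] abs_mult by (simp add: mult_ac)
      qed
      moreover have "(\<lambda>\<tau>. kat_kernel al r t \<tau> * g \<tau>) integrable_on {a..t}"
        using kat_kernel_times_absolutely_integrable(1)[OF _ _ _ _ _ _ _ g] ab al elim r0
        by (simp add: absolutely_integrable_on_def)
      ultimately show ?case by blast
    qed
    show "(\<lambda>\<tau>. C * G * (t - \<tau>) powr (- al)) integrable_on {a..t}"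
      using has_integral_powr_shift_left[OF al(2) ab(2)] has_integral_mult_right by blast
    show "((\<lambda>r. kat_kernel al r t \<tau> * g \<tau>) has_real_derivative D \<tau>) (at r0)" if "\<tau> \<in> {a..t}" for \<tau>
    proof (cases "\<tau> < t")
      case True
      have "0 < \<tau>" using that ab by simp
      from DERIV_cmult_right[OF has_real_derivative_kat_kernel_order[OF this True r0], where c = "g \<tau>"]
      show ?thesis unfolding D_def using True by simp
    next
      case False
      then have "\<tau> = t" using that by simp
      then show ?thesis unfolding D_def by simp
    qed
  qed
  then show ?thesis unfolding kat_left_int_def real_differentiable_def by blast
qed

lemma lborel_integral_kat_kernel:
  fixes a b al r :: real and v :: "real \<Rightarrow> real"
  assumes [measurable]: "v \<in> borel_measurable borel"
    and v: "continuous_on {a..b} v" and pos: "0 < a" "0 < al" "al < 1" "0 < r"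
  shows "t \<in> {a..b} \<Longrightarrow> integrable lborel (\<lambda>\<tau>. indicator {a..t} \<tau> * (kat_kernel al r t \<tau> * v \<tau>))"
    and "t \<in> {a..b} \<Longrightarrow> (\<integral>\<tau>. indicator {a..t} \<tau> * (kat_kernel al r t \<tau> * v \<tau>) \<partial>lborel) = kat_left_int a al r v t"
    and "\<tau> \<in> {a..b} \<Longrightarrow> integrable lborel (\<lambda>t. indicator {\<tau>..b} t * (kat_kernel al r t \<tau> * v t))"
    and "\<tau> \<in> {a..b} \<Longrightarrow> (\<integral>t. indicator {\<tau>..b} t * (kat_kernel al r t \<tau> * v t) \<partial>lborel)
           = integral {\<tau>..b} (\<lambda>t. kat_kernel al r t \<tau> * v t)"
proof -
  assume t: "t \<in> {a..b}"
  have [measurable]: "(\<lambda>\<tau>. kat_kernel al r t \<tau>) \<in> borel_measurable borel"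
    unfolding kat_kernel_def by measurable
  have "(\<lambda>\<tau>. kat_kernel al r t \<tau> * v \<tau>) absolutely_integrable_on {a..t}"
    using kat_kernel_times_absolutely_integrable(1)[of a a t b al r v] t pos v by auto
  then have "set_integrable lborel {a..t} (\<lambda>\<tau>. kat_kernel al r t \<tau> * v \<tau>)"
    by (rule set_integrable_absolutely_integrable_borel) measurable
  then show "integrable lborel (\<lambda>\<tau>. indicator {a..t} \<tau> * (kat_kernel al r t \<tau> * v \<tau>))"
      "(\<integral>\<tau>. indicator {a..t} \<tau> * (kat_kernel al r t \<tau> * v \<tau>) \<partial>lborel) = kat_left_int a al r v t"
    using lborel_integral_indicator_Icc unfolding kat_left_int_def by blast+
next
  assume \<tau>: "\<tau> \<in> {a..b}"
  have [measurable]: "(\<lambda>t. kat_kernel al r t \<tau>) \<in> borel_measurable borel"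
    unfolding kat_kernel_def by measurable
  have "(\<lambda>t. kat_kernel al r t \<tau> * v t) absolutely_integrable_on {\<tau>..b}"
    using kat_kernel_times_absolutely_integrable(2)[of a \<tau> b b al r v] \<tau> pos v by auto
  then have "set_integrable lborel {\<tau>..b} (\<lambda>t. kat_kernel al r t \<tau> * v t)"
    by (rule set_integrable_absolutely_integrable_borel) measurable
  then show "integrable lborel (\<lambda>t. indicator {\<tau>..b} t * (kat_kernel al r t \<tau> * v t))"
      "(\<integral>t. indicator {\<tau>..b} t * (kat_kernel al r t \<tau> * v t) \<partial>lborel)
         = integral {\<tau>..b} (\<lambda>t. kat_kernel al r t \<tau> * v t)"
    using lborel_integral_indicator_Icc by blast+
qed

lemma kat_left_int_fubini_borel:
  fixes a b al r :: real and f g :: "real \<Rightarrow> real"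
  assumes ab: "0 < a" "a \<le> b" and al: "0 < al" "al < 1" and r: "0 < r"
    and [measurable]: "f \<in> borel_measurable borel" "g \<in> borel_measurable borel"
    and f: "continuous_on {a..b} f" and g: "continuous_on {a..b} g"
    and K: "continuous_on {a..b} (kat_right_int b al r f)"
  shows "integral {a..b} (\<lambda>t. f t * kat_left_int a al r g t)
       = integral {a..b} (\<lambda>\<tau>. g \<tau> * kat_right_int b al r f \<tau>)"
proof -
  note lborel_g = lborel_integral_kat_kernel[OF _ g ab(1) al r]
  note lborel_f = lborel_integral_kat_kernel[OF _ f ab(1) al r]
  define F where "F t \<tau> = (if a \<le> \<tau> \<and> \<tau> \<le> t \<and> t \<le> b then f t * kat_kernel al r t \<tau> * g \<tau> else 0)"
    for t \<tau>
  have F_meas: "(\<lambda>(t, \<tau>). F t \<tau>) \<in> borel_measurable (lborel \<Otimes>\<^sub>M lborel)"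
    unfolding F_def kat_kernel_def by measurable
  have F_left: "F t \<tau> = indicator {a..b} t * f t * (indicator {a..t} \<tau> * (kat_kernel al r t \<tau> * g \<tau>))"
    and F_right: "F t \<tau> = indicator {a..b} \<tau> * g \<tau> * (indicator {\<tau>..b} t * (kat_kernel al r t \<tau> * f t))"
    and F_norm: "norm (F t \<tau>) = indicator {a..b} t * \<bar>f t\<bar> * (indicator {a..t} \<tau> * (kat_kernel al r t \<tau> * \<bar>g \<tau>\<bar>))"
    for t \<tau>
    unfolding F_def by (auto simp: indicator_def abs_mult kat_kernel_nonneg)
  have inner_left: "integrable lborel (F t) \<and> (\<integral>\<tau>. F t \<tau> \<partial>lborel) = indicator {a..b} t * f t * kat_left_int a al r g t"
    for t
    unfolding F_left by (cases "t \<in> {a..b}") (simp_all add: lborel_g)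
  have inner_right: "(\<integral>t. F t \<tau> \<partial>lborel) = indicator {a..b} \<tau> * g \<tau> * kat_right_int b al r f \<tau>"
    for \<tau>
    unfolding F_right kat_right_int_def kat_kernel_def[symmetric]
    by (cases "\<tau> \<in> {a..b}") (simp_all add: lborel_f)
  have inner_norm: "(\<integral>\<tau>. norm (F t \<tau>) \<partial>lborel) = indicator {a..b} t *\<^sub>R (\<bar>f t\<bar> * kat_left_int a al r (\<lambda>x. \<bar>g x\<bar>) t)"
    for t
    unfolding F_norm using lborel_integral_kat_kernel(2)[OF _ _ ab(1) al r, of "\<lambda>x. \<bar>g x\<bar>" b t] g
    by (cases "t \<in> {a..b}") (auto intro: continuous_intros)
  have "integrable lborel (\<lambda>t. \<integral>\<tau>. norm (F t \<tau>) \<partial>lborel)"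
    unfolding inner_norm
    by (intro borel_integrable_compact continuous_intros kat_left_int_continuous_on f g ab al r) auto
  then have "integrable (lborel \<Otimes>\<^sub>M lborel) (\<lambda>(t, \<tau>). F t \<tau>)"
    using inner_left by (intro lborel_pair.Fubini_integrable F_meas) auto
  then have "(\<integral>\<tau>. (\<integral>t. F t \<tau> \<partial>lborel) \<partial>lborel) = (\<integral>t. (\<integral>\<tau>. F t \<tau> \<partial>lborel) \<partial>lborel)"
    by (rule lborel_pair.Fubini_integral)
  moreover have "(\<integral>t. (\<integral>\<tau>. F t \<tau> \<partial>lborel) \<partial>lborel) = integral {a..b} (\<lambda>t. f t * kat_left_int a al r g t)"
    using inner_left lborel_integral_indicator_Icc(2)[OF set_integrable_continuous_Icc]
      kat_left_int_continuous_on[OF ab al r g] f by (simp add: continuous_intros mult.assoc)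
  moreover have "(\<integral>\<tau>. (\<integral>t. F t \<tau> \<partial>lborel) \<partial>lborel) = integral {a..b} (\<lambda>\<tau>. g \<tau> * kat_right_int b al r f \<tau>)"
    using inner_right lborel_integral_indicator_Icc(2)[OF set_integrable_continuous_Icc] K g
    by (simp add: continuous_intros mult.assoc)
  ultimately show ?thesis by simp
qed

lemma kat_left_int_fubini:
  fixes a b al r :: real and f g :: "real \<Rightarrow> real"
  assumes ab: "0 < a" "a \<le> b" and al: "0 < al" "al < 1" and r: "0 < r"
    and f: "continuous_on {a..b} f" and g: "continuous_on {a..b} g"
    and K: "continuous_on {a..b} (kat_right_int b al r f)"
  shows "integral {a..b} (\<lambda>t. f t * kat_left_int a al r g t)
       = integral {a..b} (\<lambda>\<tau>. g \<tau> * kat_right_int b al r f \<tau>)"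
proof -
  define fc where "fc x = f (max a (min b x))" for x
  define gc where "gc x = g (max a (min b x))" for x
  have meas: "fc \<in> borel_measurable borel" "gc \<in> borel_measurable borel"
    and fc: "\<And>x. x \<in> {a..b} \<Longrightarrow> fc x = f x" and gc: "\<And>x. x \<in> {a..b} \<Longrightarrow> gc x = g x"
    and fc_cont: "continuous_on {a..b} fc" and gc_cont: "continuous_on {a..b} gc"
    using continuous_clamp_borel_measurable[OF f ab(2)] continuous_clamp_borel_measurable[OF g ab(2)]
    unfolding fc_def[symmetric] gc_def[symmetric] by (auto intro: continuous_on_subset)
  have left_cong: "kat_left_int a al r gc t = kat_left_int a al r g t" if "t \<in> {a..b}" for t
    unfolding kat_left_int_def using that gc by (intro integral_cong) auto
  have right_cong: "kat_right_int b al r fc \<tau> = kat_right_int b al r f \<tau>" if "\<tau> \<in> {a..b}" for \<tau>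
    unfolding kat_right_int_def using that fc by (intro integral_cong) auto
  have K': "continuous_on {a..b} (kat_right_int b al r fc)"
    by (rule continuous_on_eq[OF K]) (simp add: right_cong)
  have "integral {a..b} (\<lambda>t. f t * kat_left_int a al r g t) = integral {a..b} (\<lambda>t. fc t * kat_left_int a al r gc t)"
    by (intro integral_cong) (simp add: fc left_cong)
  also have "\<dots> = integral {a..b} (\<lambda>\<tau>. gc \<tau> * kat_right_int b al r fc \<tau>)"
    by (rule kat_left_int_fubini_borel[OF ab al r meas fc_cont gc_cont K'])
  also have "\<dots> = integral {a..b} (\<lambda>\<tau>. g \<tau> * kat_right_int b al r f \<tau>)"
    by (intro integral_cong) (simp add: gc right_cong)
  finally show ?thesis .
qed

section \<open>The Caputo--Katugampola derivative\<close>

lemma dC1_eqI: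
  assumes "a < b" "t \<in> {a..b}" "(x has_vector_derivative D) (at t within {a..b})"
  shows "dC1 a b x t = D"
  unfolding dC1_def using vector_derivative_within_cbox[of a b t x D] assms by simp

lemma C1_onD:
  assumes "C1_on a b x" "a < b"
  shows "\<And>t. t \<in> {a..b} \<Longrightarrow> (x has_vector_derivative dC1 a b x t) (at t within {a..b})"
    and "continuous_on {a..b} (dC1 a b x)"
    and "continuous_on {a..b} x"
proof -
  obtain D where D: "\<And>t. t \<in> {a..b} \<Longrightarrow> (x has_vector_derivative D t) (at t within {a..b})"
    "continuous_on {a..b} D"
    using assms(1) unfolding C1_on_def by blast
  have eq: "dC1 a b x t = D t" if "t \<in> {a..b}" for t
    by (rule dC1_eqI[OF assms(2) that D(1)[OF that]])
  show deriv: "\<And>t. t \<in> {a..b} \<Longrightarrow> (x has_vector_derivative dC1 a b x t) (at t within {a..b})"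
    using D(1) eq by simp
  show "continuous_on {a..b} (dC1 a b x)" using continuous_on_eq[OF D(2)] eq by simp
  show "continuous_on {a..b} x"
    unfolding continuous_on_eq_continuous_within
    using differentiable_imp_continuous_within[OF differentiableI_vector[OF deriv]] by blast
qed

lemma C1_on_add_scaled:
  assumes x: "C1_on a b x" and \<eta>: "C1_on a b \<eta>" and ab: "a < b"
  shows "C1_on a b (\<lambda>s. x s + e * \<eta> s)"
    and "t \<in> {a..b} \<Longrightarrow> dC1 a b (\<lambda>s. x s + e * \<eta> s) t = dC1 a b x t + e * dC1 a b \<eta> t"
proof -
  have deriv: "((\<lambda>s. x s + e * \<eta> s) has_vector_derivative dC1 a b x t + e * dC1 a b \<eta> t) (at t within {a..b})"
    if "t \<in> {a..b}" for t
    using C1_onD(1)[OF x ab that] C1_onD(1)[OF \<eta> ab that] by (auto intro!: derivative_eq_intros)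
  show "C1_on a b (\<lambda>s. x s + e * \<eta> s)"
    unfolding C1_on_def using deriv C1_onD(2)[OF x ab] C1_onD(2)[OF \<eta> ab]
    by (intro exI[of _ "\<lambda>t. dC1 a b x t + e * dC1 a b \<eta> t"]) (auto intro!: continuous_intros)
  show "t \<in> {a..b} \<Longrightarrow> dC1 a b (\<lambda>s. x s + e * \<eta> s) t = dC1 a b x t + e * dC1 a b \<eta> t"
    using deriv ab by (intro dC1_eqI) auto
qed

lemma C1_on_of_real_derivative:
  assumes "\<And>t. (\<eta> has_real_derivative \<eta>' t) (at t)" "continuous_on {a..b} \<eta>'"
  shows "C1_on a b \<eta>" and "a < b \<Longrightarrow> t \<in> {a..b} \<Longrightarrow> dC1 a b \<eta> t = \<eta>' t"
proof -
  have "(\<eta> has_vector_derivative \<eta>' t) (at t within {a..b})" for t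
    using assms(1) by (simp add: has_real_derivative_iff_has_vector_derivative has_vector_derivative_at_within)
  then show "C1_on a b \<eta>" "a < b \<Longrightarrow> t \<in> {a..b} \<Longrightarrow> dC1 a b \<eta> t = \<eta>' t"
    using assms(2) dC1_eqI unfolding C1_on_def by blast+
qed

lemma caputo_kat_eq_kat_left_int:
  "caputo_kat a b al r x t = r powr al / Gamma (1 - al) * kat_left_int a al r (dC1 a b x) t"
  unfolding caputo_kat_def kat_left_int_def kat_kernel_def ..

lemma caputo_kat_continuous_on:
  assumes "C1_on a b x" "0 < a" "a < b" "0 < al" "al < 1" "0 < r"
  shows "continuous_on {a..b} (caputo_kat a b al r x)"
  unfolding caputo_kat_eq_kat_left_int using assms C1_onD(2)[OF assms(1,3)]
  by (intro continuous_intros kat_left_int_continuous_on) auto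

lemma caputo_kat_add_scaled:
  assumes x: "C1_on a b x" and \<eta>: "C1_on a b \<eta>" and pos: "0 < a" "a < b" "0 < al" "al < 1" "0 < r"
    and t: "t \<in> {a..b}"
  shows "caputo_kat a b al r (\<lambda>s. x s + e * \<eta> s) t = caputo_kat a b al r x t + e * caputo_kat a b al r \<eta> t"
proof -
  have int: "(\<lambda>\<tau>. kat_kernel al r t \<tau> * dC1 a b y \<tau>) integrable_on {a..t}" if "C1_on a b y" for y
    using kat_kernel_times_absolutely_integrable(1)[OF _ _ _ _ _ _ _ C1_onD(2)[OF that pos(2)]] pos t
    by (simp add: absolutely_integrable_on_def)
  have "kat_left_int a al r (dC1 a b (\<lambda>s. x s + e * \<eta> s)) t
      = integral {a..t} (\<lambda>\<tau>. kat_kernel al r t \<tau> * dC1 a b x \<tau> + e * (kat_kernel al r t \<tau> * dC1 a b \<eta> \<tau>))"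
    unfolding kat_left_int_def using t
    by (intro integral_cong) (auto simp: C1_on_add_scaled(2)[OF x \<eta> pos(2)] algebra_simps)
  also have "\<dots> = kat_left_int a al r (dC1 a b x) t + e * kat_left_int a al r (dC1 a b \<eta>) t"
    unfolding kat_left_int_def
    using integral_add[OF int[OF x] integrable_on_mult_right[OF int[OF \<eta>], of e]] by simp
  finally show ?thesis unfolding caputo_kat_eq_kat_left_int by (simp add: algebra_simps)
qed

lemma caputo_kat_order_lipschitz:
  fixes a b al r1 r2 :: real
  assumes x: "C1_on a b x" and pos: "0 < a" "a < b" "0 < al" "al < 1" "0 < r1"
  obtains K where "0 \<le> K"
    "\<And>r r' t. r1 \<le> r \<Longrightarrow> r \<le> r2 \<Longrightarrow> r1 \<le> r' \<Longrightarrow> r' \<le> r2 \<Longrightarrow> t \<in> {a..b} \<Longrightarrow>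
       \<bar>caputo_kat a b al r x t - caputo_kat a b al r' x t\<bar> \<le> K * \<bar>r - r'\<bar>"
proof -
  define g where "g = dC1 a b x"
  define \<Gamma> where "\<Gamma> = Gamma (1 - al)"
  define c where "c r = r powr al / \<Gamma>" for r
  have g: "continuous_on {a..b} g" unfolding g_def by (rule C1_onD(2)[OF x pos(2)])
  obtain G where G: "\<And>\<tau>. \<tau> \<in> {a..b} \<Longrightarrow> \<bar>g \<tau>\<bar> \<le> G"
    using continuous_on_compact_bound[OF compact_Icc g] by auto
  obtain B where B: "0 \<le> B" "\<And>r t. r1 \<le> r \<Longrightarrow> r \<le> r2 \<Longrightarrow> t \<in> {a..b} \<Longrightarrow> \<bar>kat_left_int a al r g t\<bar> \<le> B * G"
    using kat_left_int_bound[of a b al r1 r2] pos g G by (metis less_imp_le)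
  obtain C where C: "\<And>r r' t. r1 \<le> r \<Longrightarrow> r \<le> r2 \<Longrightarrow> r1 \<le> r' \<Longrightarrow> r' \<le> r2 \<Longrightarrow> t \<in> {a..b} \<Longrightarrow>
      \<bar>kat_left_int a al r g t - kat_left_int a al r' g t\<bar> \<le> C * G * \<bar>r - r'\<bar>"
    using kat_left_int_order_lipschitz[of a b al r1 r2] pos g G by (metis less_imp_le)
  have \<Gamma>: "0 < \<Gamma>" unfolding \<Gamma>_def using pos by (intro Gamma_real_pos) simp
  have c_bound: "0 \<le> c r" "c r \<le> c r2" if "r1 \<le> r" "r \<le> r2" for r
    unfolding c_def using that pos \<Gamma> by (auto intro!: divide_right_mono powr_mono2)
  define Lc where "Lc = al * r1 powr (al - 1) / \<Gamma>"
  have c_lip: "\<bar>c r - c r'\<bar> \<le> Lc * \<bar>r - r'\<bar>" if "r1 \<le> r" "r1 \<le> r'" for r r'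
    using divide_right_mono[OF abs_powr_diff_le[of r1 r r' al], of \<Gamma>] that pos \<Gamma>
    unfolding c_def Lc_def by (simp add: diff_divide_distrib[symmetric] abs_divide)
  define K where "K = max 0 (c r2 * C * G + Lc * B * G)"
  have "\<bar>caputo_kat a b al r x t - caputo_kat a b al r' x t\<bar> \<le> K * \<bar>r - r'\<bar>"
    if r: "r1 \<le> r" "r \<le> r2" "r1 \<le> r'" "r' \<le> r2" and t: "t \<in> {a..b}" for r r' t
  proof -
    have "caputo_kat a b al r x t - caputo_kat a b al r' x t
        = c r * (kat_left_int a al r g t - kat_left_int a al r' g t) + (c r - c r') * kat_left_int a al r' g t"
      unfolding caputo_kat_eq_kat_left_int c_def g_def \<Gamma>_def by (simp add: algebra_simps)
    also have "\<bar>\<dots>\<bar> \<le> \<bar>c r * (kat_left_int a al r g t - kat_left_int a al r' g t)\<bar>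
        + \<bar>(c r - c r') * kat_left_int a al r' g t\<bar>"
      by (rule abs_triangle_ineq)
    also have "\<dots> = c r * \<bar>kat_left_int a al r g t - kat_left_int a al r' g t\<bar>
        + \<bar>c r - c r'\<bar> * \<bar>kat_left_int a al r' g t\<bar>"
      using c_bound(1)[OF r(1,2)] by (simp add: abs_mult)
    also have "\<dots> \<le> c r2 * (C * G * \<bar>r - r'\<bar>) + (Lc * \<bar>r - r'\<bar>) * (B * G)"
      using c_bound[OF r(1,2)] C[OF r t] c_lip[OF r(1,3)] B(2)[OF r(3,4) t]
      by (intro add_mono mult_mono) auto
    also have "\<dots> = (c r2 * C * G + Lc * B * G) * \<bar>r - r'\<bar>" by (simp add: algebra_simps)
    also have "\<dots> \<le> K * \<bar>r - r'\<bar>" unfolding K_def by (intro mult_right_mono) auto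
    finally show ?thesis .
  qed
  moreover have "0 \<le> K" unfolding K_def by simp
  ultimately show ?thesis using that by blast
qed

lemma caputo_kat_differentiable_order:
  assumes x: "C1_on a b x" and pos: "0 < a" "a < b" "0 < al" "al < 1" "0 < r0" and t: "t \<in> {a..b}"
  shows "(\<lambda>r. caputo_kat a b al r x t) differentiable (at r0)"
proof -
  have "(\<lambda>r. kat_left_int a al r (dC1 a b x) t) differentiable (at r0)"
    using kat_left_int_differentiable_order[OF _ _ _ _ _ _ C1_onD(2)[OF x pos(2)]] pos t by auto
  then obtain D where "((\<lambda>r. kat_left_int a al r (dC1 a b x) t) has_real_derivative D) (at r0)"
    unfolding real_differentiable_def by blast
  moreover have "((\<lambda>r. r powr al / Gamma (1 - al)) has_real_derivative al * r0 powr (al - 1) / Gamma (1 - al)) (at r0)"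
    using DERIV_cdivide[OF has_real_derivative_powr[OF pos(5)]] by simp
  ultimately show ?thesis
    unfolding caputo_kat_eq_kat_left_int real_differentiable_def by (metis DERIV_mult)
qed

lemma integral_caputo_kat_by_parts:
  fixes a b al r :: real and f \<eta> \<eta>' :: "real \<Rightarrow> real"
  assumes pos: "0 < a" "a < b" "0 < al" "al < 1" "0 < r"
    and f: "continuous_on {a..b} f"
    and K_diff: "\<And>t. t \<in> {a..b} \<Longrightarrow> kat_right_int b al r f differentiable (at t within {a..b})"
    and K'_cont: "continuous_on {a..b} (kat_right a b al r f)"
    and \<eta>: "\<And>t. (\<eta> has_real_derivative \<eta>' t) (at t)" "continuous_on {a..b} \<eta>'" "\<eta> a = 0" "\<eta> b = 0"
  shows "integral {a..b} (\<lambda>t. f t * caputo_kat a b al r \<eta> t)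
       = - integral {a..b} (\<lambda>t. \<eta> t * kat_right a b al r f t)"
proof -
  define K where "K = kat_right_int b al r f"
  define K' where "K' t = vector_derivative K (at t within {a..b})" for t
  define c where "c = r powr al / Gamma (1 - al)"
  have c: "0 < c" unfolding c_def using pos by (intro divide_pos_pos Gamma_real_pos) auto
  have K_right: "kat_right a b al r f t = c * K' t" for t
    unfolding kat_right_def K'_def K_def c_def ..
  have K'_cont': "continuous_on {a..b} K'"
    using continuous_on_mult_left[OF K'_cont, of "1 / c"] c by (simp add: K_right)
  have K_deriv: "(K has_vector_derivative K' t) (at t within {a..b})" if "t \<in> {a..b}" for t
    using K_diff[OF that] unfolding K'_def K_def vector_derivative_works .
  have K_cont: "continuous_on {a..b} K"
    unfolding continuous_on_eq_continuous_within using K_deriv has_vector_derivative_continuous by blast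
  have caputo_\<eta>: "caputo_kat a b al r \<eta> t = c * kat_left_int a al r \<eta>' t" if "t \<in> {a..b}" for t
    unfolding caputo_kat_eq_kat_left_int c_def kat_left_int_def
    using that pos C1_on_of_real_derivative(2)[OF \<eta>(1,2)]
    by (intro arg_cong[where f = "(*) _"] integral_cong) auto
  have "integral {a..b} (\<lambda>t. f t * caputo_kat a b al r \<eta> t)
      = integral {a..b} (\<lambda>t. c * (f t * kat_left_int a al r \<eta>' t))"
    by (rule integral_cong) (simp add: caputo_\<eta> mult.left_commute)
  also have "\<dots> = c * integral {a..b} (\<lambda>t. f t * kat_left_int a al r \<eta>' t)"
    by simp
  also have "integral {a..b} (\<lambda>t. f t * kat_left_int a al r \<eta>' t) = integral {a..b} (\<lambda>t. \<eta>' t * K t)"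
    unfolding K_def using pos f \<eta>(2) K_cont[unfolded K_def] by (intro kat_left_int_fubini) auto
  also have "\<dots> = - integral {a..b} (\<lambda>t. \<eta> t * K' t)"
    using pos K_deriv K'_cont' \<eta> by (intro integral_derivative_times_by_parts) auto
  finally show ?thesis by (simp add: K_right mult.left_commute)
qed

section \<open>Calculus of variations\<close>

lemma has_real_derivative_comp_partials:
  fixes f :: "real \<Rightarrow> real \<Rightarrow> real" and Y Z :: "real \<Rightarrow> real"
  assumes f2: "\<And>y z. (\<lambda>y'. f y' z) differentiable (at y)"
    and f3: "\<And>y z. (\<lambda>z'. f y z') differentiable (at z)"
    and f3_cont: "continuous_on UNIV (\<lambda>(y, z). deriv (\<lambda>z'. f y z') z)"
    and Y: "(Y has_real_derivative Y') (at e0)" and Z: "(Z has_real_derivative Z') (at e0)"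
  shows "((\<lambda>e. f (Y e) (Z e)) has_real_derivative
           deriv (\<lambda>y'. f y' (Z e0)) (Y e0) * Y' + deriv (\<lambda>z'. f (Y e0) z') (Z e0) * Z') (at e0)"
proof -
  define D2 where "D2 = deriv (\<lambda>y'. f y' (Z e0)) (Y e0)"
  define D3 where "D3 y z = deriv (\<lambda>z'. f y z') z" for y z
  have fx: "((\<lambda>y. f y (Z e0)) has_derivative (*) D2) (at (Y e0) within UNIV)"
    using f2 unfolding D2_def DERIV_deriv_iff_real_differentiable[symmetric] has_field_derivative_def
    by simp
  have fy: "((\<lambda>z. f y z) has_derivative blinfun_apply (blinfun_mult_right (D3 y z))) (at z within UNIV)"
    for y z
    using f3 unfolding D3_def DERIV_deriv_iff_real_differentiable[symmetric] has_field_derivative_def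
    by simp
  have "continuous_on UNIV (\<lambda>p. blinfun_mult_right ((\<lambda>(y, z). D3 y z) p))"
    using bounded_linear.continuous_on[OF bounded_linear_blinfun_mult_right f3_cont]
    unfolding D3_def .
  then have "continuous (at (Y e0, Z e0) within UNIV \<times> UNIV) (\<lambda>(y, z). blinfun_mult_right (D3 y z))"
    by (simp add: continuous_on_eq_continuous_within case_prod_beta')
  from has_derivative_partialsI[OF fx fy this]
  have "((\<lambda>(y, z). f y z) has_derivative (\<lambda>(ty, tz). D2 * ty + D3 (Y e0) (Z e0) * tz)) (at (Y e0, Z e0))"
    by simp
  moreover have "((\<lambda>e. (Y e, Z e)) has_derivative (\<lambda>h. (Y' * h, Z' * h))) (at e0)"
    using Y Z unfolding has_field_derivative_def by (rule has_derivative_Pair)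
  ultimately have "((\<lambda>e. f (Y e) (Z e)) has_derivative (\<lambda>h. D2 * (Y' * h) + D3 (Y e0) (Z e0) * (Z' * h))) (at e0)"
    using has_derivative_compose[of "\<lambda>e. (Y e, Z e)"] by fastforce
  moreover have "(\<lambda>h. D2 * (Y' * h) + D3 (Y e0) (Z e0) * (Z' * h)) = (*) (D2 * Y' + D3 (Y e0) (Z e0) * Z')"
    by (auto simp: algebra_simps)
  ultimately show ?thesis
    unfolding has_field_derivative_def D2_def[symmetric] D3_def[symmetric] by simp
qed

lemma has_real_derivative_max0_power2:
  "((\<lambda>u::real. (max 0 u)\<^sup>2) has_real_derivative 2 * max 0 u) (at u)"
proof (cases u "0 :: real" rule: linorder_cases)
  case less
  have "((\<lambda>_. 0) has_real_derivative 2 * max 0 u) (at u)" using less by simp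
  then show ?thesis
    by (rule has_field_derivative_transform_within_open[where S = "{..<0}"]) (use less in auto)
next
  case equal
  have "\<forall>\<^sub>F v in at (0::real). norm (((max 0 v)\<^sup>2 - (max 0 0)\<^sup>2) / (v - 0)) \<le> \<bar>v\<bar>"
    by (auto simp: max_def power2_eq_square abs_mult)
  moreover have "((\<lambda>v::real. \<bar>v\<bar>) \<longlongrightarrow> 0) (at 0)"
    using tendsto_rabs[OF tendsto_ident_at[of 0 UNIV]] by simp
  ultimately have "((\<lambda>v. ((max 0 v)\<^sup>2 - (max 0 0)\<^sup>2) / (v - 0)) \<longlongrightarrow> 0) (at (0::real))"
    by (rule Lim_null_comparison)
  then show ?thesis using equal by (simp add: has_field_derivative_iff)
next
  case greater
  have "((\<lambda>u. u\<^sup>2) has_real_derivative 2 * u) (at u)"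
    by (auto intro!: derivative_eq_intros)
  then have "((\<lambda>u. u\<^sup>2) has_real_derivative 2 * max 0 u) (at u)"
    using greater by simp
  then show ?thesis
    by (rule has_field_derivative_transform_within_open[where S = "{0<..}"]) (use greater in auto)
qed

definition bump :: "real \<Rightarrow> real \<Rightarrow> real \<Rightarrow> real" where
  "bump c d t = (max 0 (d\<^sup>2 - (t - c)\<^sup>2))\<^sup>2"

lemma has_real_derivative_bump:
  "(bump c d has_real_derivative 2 * max 0 (d\<^sup>2 - (t - c)\<^sup>2) * (- 2 * (t - c))) (at t)"
proof -
  have "((\<lambda>t. d\<^sup>2 - (t - c)\<^sup>2) has_real_derivative - 2 * (t - c)) (at t)"
    by (auto intro!: derivative_eq_intros)
  from DERIV_chain2[OF has_real_derivative_max0_power2 this] show ?thesis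
    unfolding bump_def by simp
qed

lemma bump_nonneg: "0 \<le> bump c d t"
  unfolding bump_def by simp

lemma bump_eq_0:
  assumes "0 \<le> d" "d \<le> \<bar>t - c\<bar>"
  shows "bump c d t = 0"
proof -
  have "d\<^sup>2 \<le> (t - c)\<^sup>2" using assms by (metis abs_le_square_iff abs_of_nonneg)
  then show ?thesis unfolding bump_def by simp
qed

lemma bump_center: "0 < d \<Longrightarrow> 0 < bump c d c"
  unfolding bump_def by simp

lemma fundamental_lemma_variations:
  fixes h :: "real \<Rightarrow> real"
  assumes ab: "a < b" and h: "continuous_on {a..b} h"
    and zero: "\<And>\<eta> \<eta>'. (\<And>t. (\<eta> has_real_derivative \<eta>' t) (at t)) \<Longrightarrow> continuous_on {a..b} \<eta>' \<Longrightarrow>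
        \<eta> a = 0 \<Longrightarrow> \<eta> b = 0 \<Longrightarrow> integral {a..b} (\<lambda>t. h t * \<eta> t) = 0"
  shows "\<forall>t\<in>{a..b}. h t = 0"
proof (rule ccontr)
  assume "\<not> (\<forall>t\<in>{a..b}. h t = 0)"
  then obtain t0 where t0: "t0 \<in> {a..b}" "h t0 \<noteq> 0" by auto
  define s where "s = sgn (h t0)"
  obtain e where e: "0 < e" "\<And>t. t \<in> {a..b} \<Longrightarrow> dist t t0 < e \<Longrightarrow> dist (h t) (h t0) < \<bar>h t0\<bar>"
    using h t0 unfolding continuous_on_iff by (metis zero_less_abs_iff)
  have pos: "0 < s * h t" if "t \<in> {a..b}" "\<bar>t - t0\<bar> < e" for t
    using e(2)[OF that(1)] that(2) t0(2) unfolding s_def dist_real_def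
    by (cases "h t0 > 0") (auto simp: abs_less_iff)
  define d where "d = min (e / 2) ((b - a) / 4)"
  have d: "0 < d" "d \<le> e / 2" "d \<le> (b - a) / 4" using e ab unfolding d_def by (auto simp: min_def)
  define c where "c = max (a + d) (min (b - d) t0)"
  have c: "a \<le> c - d" "c + d \<le> b" "\<bar>c - t0\<bar> \<le> d" "c \<in> {a..b}" using d t0 unfolding c_def by auto
  define \<phi> where "\<phi> t = s * h t * bump c d t" for t
  have \<phi>_nonneg: "0 \<le> \<phi> t" if "t \<in> {a..b}" for t
  proof (cases "\<bar>t - c\<bar> < d")
    case True
    then have "\<bar>t - t0\<bar> < e" using c(3) d(2) by arith
    then have "0 < s * h t" using pos that by simp
    then show ?thesis unfolding \<phi>_def using bump_nonneg by simp
  next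
    case False
    then show ?thesis unfolding \<phi>_def using bump_eq_0 d by simp
  qed
  have "integral {a..b} \<phi> = s * integral {a..b} (\<lambda>t. h t * bump c d t)"
    unfolding \<phi>_def by (simp add: mult.assoc)
  also have "integral {a..b} (\<lambda>t. h t * bump c d t) = 0"
  proof (rule zero[OF has_real_derivative_bump])
    show "continuous_on {a..b} (\<lambda>t. 2 * max 0 (d\<^sup>2 - (t - c)\<^sup>2) * (- 2 * (t - c)))"
      by (intro continuous_intros)
    show "bump c d a = 0" "bump c d b = 0"
      using c d by (auto intro!: bump_eq_0)
  qed
  moreover have "continuous_on {a..b} \<phi>"
    unfolding \<phi>_def bump_def by (intro continuous_intros h)
  ultimately have "\<forall>t\<in>{a..b}. \<phi> t = 0"
    using integral_eq_0_iff[of a b \<phi>] ab \<phi>_nonneg by simp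
  moreover have "0 < \<phi> c"
    unfolding \<phi>_def using pos[OF c(4)] c d bump_center[OF d(1)] by simp
  ultimately show False using c(4) by simp
qed

lemma eventually_ge_along_variation:
  fixes J :: "(real \<Rightarrow> real) \<Rightarrow> real" and x \<eta> \<eta>' :: "real \<Rightarrow> real"
  assumes ab: "a < b" and x: "C1_on a b x"
    and \<eta>: "\<And>t. (\<eta> has_real_derivative \<eta>' t) (at t)" "continuous_on {a..b} \<eta>'" "\<eta> a = 0" "\<eta> b = 0"
    and min: "\<exists>\<delta>>0. \<forall>y. C1_on a b y \<and> y a = x a \<and> y b = x b
        \<and> (\<forall>t\<in>{a..b}. \<bar>y t - x t\<bar> < \<delta> \<and> \<bar>dC1 a b y t - dC1 a b x t\<bar> < \<delta>) \<longrightarrow> J x \<le> J y"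
  shows "\<forall>\<^sub>F e in nhds 0. J x \<le> J (\<lambda>t. x t + e * \<eta> t)"
proof -
  obtain \<delta> where \<delta>: "0 < \<delta>" "\<And>y. C1_on a b y \<Longrightarrow> y a = x a \<Longrightarrow> y b = x b \<Longrightarrow>
      (\<forall>t\<in>{a..b}. \<bar>y t - x t\<bar> < \<delta> \<and> \<bar>dC1 a b y t - dC1 a b x t\<bar> < \<delta>) \<Longrightarrow> J x \<le> J y"
    using min by blast
  have \<eta>C1: "C1_on a b \<eta>" by (rule C1_on_of_real_derivative(1)[OF \<eta>(1,2)])
  obtain M1 where M1: "\<And>t. t \<in> {a..b} \<Longrightarrow> \<bar>\<eta> t\<bar> \<le> M1"
    using continuous_on_compact_bound[OF compact_Icc C1_onD(3)[OF \<eta>C1 ab]] by auto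
  obtain M2 where M2: "\<And>t. t \<in> {a..b} \<Longrightarrow> \<bar>\<eta>' t\<bar> \<le> M2"
    using continuous_on_compact_bound[OF compact_Icc \<eta>(2)] by auto
  define M where "M = max M1 M2"
  have "\<forall>\<^sub>F e in nhds 0. e \<in> {- \<delta> / (\<bar>M\<bar> + 1) <..< \<delta> / (\<bar>M\<bar> + 1)}"
    using \<delta>(1) by (intro eventually_nhds_in_open) auto
  then show ?thesis
  proof eventually_elim
    case (elim e)
    then have "\<bar>e\<bar> < \<delta> / (\<bar>M\<bar> + 1)" by (simp add: abs_less_iff)
    then have e: "\<bar>e\<bar> * (\<bar>M\<bar> + 1) < \<delta>"
      by (subst (asm) pos_less_divide_eq) auto
    have small: "\<bar>e * v\<bar> < \<delta>" if "\<bar>v\<bar> \<le> M" for v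
    proof -
      have "\<bar>e * v\<bar> \<le> \<bar>e\<bar> * (\<bar>M\<bar> + 1)"
        unfolding abs_mult using that by (intro mult_left_mono) auto
      then show ?thesis using e by linarith
    qed
    show ?case
    proof (rule \<delta>(2))
      show "C1_on a b (\<lambda>t. x t + e * \<eta> t)" by (rule C1_on_add_scaled(1)[OF x \<eta>C1 ab])
      show "x a + e * \<eta> a = x a" "x b + e * \<eta> b = x b" using \<eta>(3,4) by simp_all
      have "\<bar>\<eta> t\<bar> \<le> M" "\<bar>\<eta>' t\<bar> \<le> M" if "t \<in> {a..b}" for t
        using M1[OF that] M2[OF that] unfolding M_def by auto
      then show "\<forall>t\<in>{a..b}. \<bar>x t + e * \<eta> t - x t\<bar> < \<delta> \<and>
          \<bar>dC1 a b (\<lambda>t. x t + e * \<eta> t) t - dC1 a b x t\<bar> < \<delta>"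
        using small C1_on_add_scaled(2)[OF x \<eta>C1 ab] C1_on_of_real_derivative(2)[OF \<eta>(1,2) ab]
        by simp
    qed
  qed
qed

lemma continuous_on_compose_Icc_UNIV:
  fixes P :: "real \<Rightarrow> real \<Rightarrow> real \<Rightarrow> real"
  assumes "continuous_on ({a..b} \<times> UNIV) (\<lambda>(t, y, z). P t y z)"
    and "continuous_on {a..b} u" "continuous_on {a..b} v"
  shows "continuous_on {a..b} (\<lambda>t. P t (u t) (v t))"
proof -
  have "continuous_on {a..b} (\<lambda>t. (\<lambda>(t, y, z). P t y z) (t, u t, v t))"
    by (rule continuous_on_compose2[OF assms(1)]) (auto intro!: continuous_intros assms(2,3))
  then show ?thesis by simp
qed

locale regular_lagrangian =
  fixes a b :: real and L :: "real \<Rightarrow> real \<Rightarrow> real \<Rightarrow> real"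
  assumes L_cont: "continuous_on ({a..b} \<times> UNIV) (\<lambda>(t, y, z). L t y z)"
    and L_d2: "\<And>t y z. t \<in> {a..b} \<Longrightarrow> (\<lambda>y'. L t y' z) differentiable (at y)"
    and L_d3: "\<And>t y z. t \<in> {a..b} \<Longrightarrow> (\<lambda>z'. L t y z') differentiable (at z)"
    and L_d2_cont: "continuous_on ({a..b} \<times> UNIV) (\<lambda>(t, y, z). partial2 L t y z)"
    and L_d3_cont: "continuous_on ({a..b} \<times> UNIV) (\<lambda>(t, y, z). partial3 L t y z)"
begin

lemma lipschitz_on_bounded:
  obtains P where "0 \<le> P"
    "\<And>t y z y' z'. t \<in> {a..b} \<Longrightarrow> \<bar>y\<bar> \<le> R \<Longrightarrow> \<bar>z\<bar> \<le> R \<Longrightarrow> \<bar>y'\<bar> \<le> R \<Longrightarrow> \<bar>z'\<bar> \<le> R \<Longrightarrow>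
       \<bar>L t y z - L t y' z'\<bar> \<le> P * (\<bar>y - y'\<bar> + \<bar>z - z'\<bar>)"
proof -
  have box: "compact ({a..b} \<times> {-R..R} \<times> {-R..R})" by (intro compact_Times) auto
  have sub: "{a..b} \<times> {-R..R} \<times> {-R..R} \<subseteq> {a..b} \<times> (UNIV :: (real \<times> real) set)" by auto
  obtain P2 where P2: "\<And>p. p \<in> {a..b} \<times> {-R..R} \<times> {-R..R} \<Longrightarrow> norm ((\<lambda>(t, y, z). partial2 L t y z) p) \<le> P2"
    using continuous_on_compact_bound[OF box continuous_on_subset[OF L_d2_cont sub]] by blast
  obtain P3 where P3: "\<And>p. p \<in> {a..b} \<times> {-R..R} \<times> {-R..R} \<Longrightarrow> norm ((\<lambda>(t, y, z). partial3 L t y z) p) \<le> P3"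
    using continuous_on_compact_bound[OF box continuous_on_subset[OF L_d3_cont sub]] by blast
  have "\<bar>L t y z - L t y' z'\<bar> \<le> max 0 (max P2 P3) * (\<bar>y - y'\<bar> + \<bar>z - z'\<bar>)"
    if t: "t \<in> {a..b}" and R: "\<bar>y\<bar> \<le> R" "\<bar>z\<bar> \<le> R" "\<bar>y'\<bar> \<le> R" "\<bar>z'\<bar> \<le> R" for t y z y' z'
  proof -
    have "norm (L t y z - L t y' z) \<le> P2 * norm (y - y')"
    proof (rule field_differentiable_bound[where S = "{-R..R}" and f' = "\<lambda>u. partial2 L t u z"])
      fix u assume u: "u \<in> {-R..R}"
      have "((\<lambda>u. L t u z) has_field_derivative partial2 L t u z) (at u)"
        unfolding partial2_def using L_d2[OF t] by (simp add: DERIV_deriv_iff_real_differentiable)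
      then show "((\<lambda>u. L t u z) has_field_derivative partial2 L t u z) (at u within {-R..R})"
        by (rule has_field_derivative_at_within)
      show "norm (partial2 L t u z) \<le> P2" using P2[of "(t, u, z)"] t u R by (auto simp: abs_le_iff)
    qed (use R in auto)
    moreover have "norm (L t y' z - L t y' z') \<le> P3 * norm (z - z')"
    proof (rule field_differentiable_bound[where S = "{-R..R}" and f' = "\<lambda>u. partial3 L t y' u"])
      fix u assume u: "u \<in> {-R..R}"
      have "((\<lambda>u. L t y' u) has_field_derivative partial3 L t y' u) (at u)"
        unfolding partial3_def using L_d3[OF t] by (simp add: DERIV_deriv_iff_real_differentiable)
      then show "((\<lambda>u. L t y' u) has_field_derivative partial3 L t y' u) (at u within {-R..R})"
        by (rule has_field_derivative_at_within)
      show "norm (partial3 L t y' u) \<le> P3" using P3[of "(t, y', u)"] t u R by (auto simp: abs_le_iff)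
    qed (use R in auto)
    moreover have "P2 * \<bar>y - y'\<bar> \<le> max 0 (max P2 P3) * \<bar>y - y'\<bar>"
      and "P3 * \<bar>z - z'\<bar> \<le> max 0 (max P2 P3) * \<bar>z - z'\<bar>"
      by (intro mult_right_mono; simp)+
    ultimately show ?thesis unfolding distrib_left by (simp only: real_norm_def) arith
  qed
  then show ?thesis using that[of "max 0 (max P2 P3)"] by simp
qed

lemma partial3_continuous_on_UNIV:
  assumes "t \<in> {a..b}"
  shows "continuous_on UNIV (\<lambda>(y, z). partial3 L t y z)"
proof -
  have "continuous_on UNIV (\<lambda>p. (\<lambda>(t, y, z). partial3 L t y z) (t, p))"
    by (rule continuous_on_compose2[OF L_d3_cont]) (use assms in \<open>auto intro!: continuous_intros\<close>)
  then show ?thesis by (simp add: case_prod_beta')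
qed

lemma lipschitz_along_family:
  fixes Y Z :: "real \<Rightarrow> real \<Rightarrow> real"
  assumes near: "\<forall>\<^sub>F e in nhds e0. continuous_on {a..b} (Y e) \<and> continuous_on {a..b} (Z e) \<and>
      (\<forall>t\<in>{a..b}. \<bar>Y e t - Y e0 t\<bar> \<le> K * \<bar>e - e0\<bar> \<and> \<bar>Z e t - Z e0 t\<bar> \<le> K * \<bar>e - e0\<bar>)"
  obtains C where "\<forall>\<^sub>F e in nhds e0. (\<lambda>t. L t (Y e t) (Z e t)) integrable_on {a..b} \<and>
      (\<forall>t\<in>{a..b}. \<bar>L t (Y e t) (Z e t) - L t (Y e0 t) (Z e0 t)\<bar> \<le> C * \<bar>e - e0\<bar>)"
proof -
  have cont0: "continuous_on {a..b} (Y e0)" "continuous_on {a..b} (Z e0)"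
    using near unfolding eventually_nhds_conv_at by simp_all
  obtain RY where RY: "\<And>t. t \<in> {a..b} \<Longrightarrow> \<bar>Y e0 t\<bar> \<le> RY"
    using continuous_on_compact_bound[OF compact_Icc cont0(1)] by auto
  obtain RZ where RZ: "\<And>t. t \<in> {a..b} \<Longrightarrow> \<bar>Z e0 t\<bar> \<le> RZ"
    using continuous_on_compact_bound[OF compact_Icc cont0(2)] by auto
  define R where "R = max RY RZ + \<bar>K\<bar>"
  obtain P where P: "0 \<le> P"
    "\<And>t y z y' z'. t \<in> {a..b} \<Longrightarrow> \<bar>y\<bar> \<le> R \<Longrightarrow> \<bar>z\<bar> \<le> R \<Longrightarrow> \<bar>y'\<bar> \<le> R \<Longrightarrow> \<bar>z'\<bar> \<le> R \<Longrightarrow>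
       \<bar>L t y z - L t y' z'\<bar> \<le> P * (\<bar>y - y'\<bar> + \<bar>z - z'\<bar>)"
    using lipschitz_on_bounded by blast
  have "\<forall>\<^sub>F e in nhds e0. e \<in> {e0 - 1 <..< e0 + 1}"
    by (intro eventually_nhds_in_open) auto
  with near have "\<forall>\<^sub>F e in nhds e0. (\<lambda>t. L t (Y e t) (Z e t)) integrable_on {a..b} \<and>
      (\<forall>t\<in>{a..b}. \<bar>L t (Y e t) (Z e t) - L t (Y e0 t) (Z e0 t)\<bar> \<le> 2 * P * \<bar>K\<bar> * \<bar>e - e0\<bar>)"
  proof eventually_elim
    case (elim e)
    then have "\<bar>e - e0\<bar> \<le> 1" by (simp add: abs_le_iff)
    have "\<bar>L t (Y e t) (Z e t) - L t (Y e0 t) (Z e0 t)\<bar> \<le> 2 * P * \<bar>K\<bar> * \<bar>e - e0\<bar>" if t: "t \<in> {a..b}" for t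
    proof -
      have dY: "\<bar>Y e t - Y e0 t\<bar> \<le> K * \<bar>e - e0\<bar>" and dZ: "\<bar>Z e t - Z e0 t\<bar> \<le> K * \<bar>e - e0\<bar>"
        using elim t by auto
      have K: "K * \<bar>e - e0\<bar> \<le> \<bar>K\<bar> * \<bar>e - e0\<bar>" "\<bar>K\<bar> * \<bar>e - e0\<bar> \<le> \<bar>K\<bar>"
        using mult_right_mono[OF abs_ge_self, of "\<bar>e - e0\<bar>" K]
          mult_left_mono[OF \<open>\<bar>e - e0\<bar> \<le> 1\<close>, of "\<bar>K\<bar>"] by simp_all
      have R: "\<bar>Y e t\<bar> \<le> R" "\<bar>Z e t\<bar> \<le> R" "\<bar>Y e0 t\<bar> \<le> R" "\<bar>Z e0 t\<bar> \<le> R"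
        using dY dZ K RY[OF t] RZ[OF t] max.cobounded1[of RY RZ] max.cobounded2[of RZ RY]
        unfolding R_def by linarith+
      have "\<bar>L t (Y e t) (Z e t) - L t (Y e0 t) (Z e0 t)\<bar> \<le> P * (\<bar>Y e t - Y e0 t\<bar> + \<bar>Z e t - Z e0 t\<bar>)"
        by (rule P(2)[OF t R])
      also have "\<dots> \<le> P * (\<bar>K\<bar> * \<bar>e - e0\<bar> + \<bar>K\<bar> * \<bar>e - e0\<bar>)"
        using dY dZ K(1) P(1) by (intro mult_left_mono) auto
      finally show ?thesis by (simp add: algebra_simps)
    qed
    moreover have "(\<lambda>t. L t (Y e t) (Z e t)) integrable_on {a..b}"
      using elim by (intro integrable_continuous_interval continuous_on_compose_Icc_UNIV[OF L_cont]) auto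
    ultimately show ?case by blast
  qed
  then show ?thesis using that by blast
qed

lemma has_real_derivative_integral:
  fixes Y Z :: "real \<Rightarrow> real \<Rightarrow> real" and Y' Z' :: "real \<Rightarrow> real"
  assumes near: "\<forall>\<^sub>F e in nhds e0. continuous_on {a..b} (Y e) \<and> continuous_on {a..b} (Z e) \<and>
      (\<forall>t\<in>{a..b}. \<bar>Y e t - Y e0 t\<bar> \<le> K * \<bar>e - e0\<bar> \<and> \<bar>Z e t - Z e0 t\<bar> \<le> K * \<bar>e - e0\<bar>)"
    and dY: "\<And>t. t \<in> {a..b} \<Longrightarrow> ((\<lambda>e. Y e t) has_real_derivative Y' t) (at e0)"
    and dZ: "\<And>t. t \<in> {a..b} \<Longrightarrow> ((\<lambda>e. Z e t) has_real_derivative Z' t) (at e0)"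
  shows "((\<lambda>e. integral {a..b} (\<lambda>t. L t (Y e t) (Z e t))) has_real_derivative
           integral {a..b} (\<lambda>t. partial2 L t (Y e0 t) (Z e0 t) * Y' t + partial3 L t (Y e0 t) (Z e0 t) * Z' t))
         (at e0)"
proof -
  obtain C where C: "\<forall>\<^sub>F e in nhds e0. (\<lambda>t. L t (Y e t) (Z e t)) integrable_on {a..b} \<and>
      (\<forall>t\<in>{a..b}. \<bar>L t (Y e t) (Z e t) - L t (Y e0 t) (Z e0 t)\<bar> \<le> C * \<bar>e - e0\<bar>)"
    using lipschitz_along_family[OF near] by blast
  show ?thesis
  proof (rule has_real_derivative_integral_dominated[where h = "\<lambda>t. C", OF C integrable_const_ivl])
    fix t assume t: "t \<in> {a..b}"
    show "((\<lambda>e. L t (Y e t) (Z e t)) has_real_derivative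
        partial2 L t (Y e0 t) (Z e0 t) * Y' t + partial3 L t (Y e0 t) (Z e0 t) * Z' t) (at e0)"
      unfolding partial2_def partial3_def
      by (rule has_real_derivative_comp_partials[OF L_d2[OF t] L_d3[OF t]
            partial3_continuous_on_UNIV[OF t, unfolded partial3_def] dY[OF t] dZ[OF t]])
  qed
qed

lemma has_real_derivative_Jfun_variation:
  fixes x \<eta> \<eta>' :: "real \<Rightarrow> real" and al rho :: real
  assumes pos: "0 < a" "a < b" "0 < al" "al < 1" "0 < rho" and x: "C1_on a b x"
    and \<eta>: "\<And>t. (\<eta> has_real_derivative \<eta>' t) (at t)" "continuous_on {a..b} \<eta>'"
  shows "((\<lambda>e. Jfun a b al L (\<lambda>t. x t + e * \<eta> t) rho) has_real_derivative
           integral {a..b} (\<lambda>t. partial2 L t (x t) (caputo_kat a b al rho x t) * \<eta> t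
             + partial3 L t (x t) (caputo_kat a b al rho x t) * caputo_kat a b al rho \<eta> t)) (at 0)"
proof -
  define \<psi> where "\<psi> = caputo_kat a b al rho x"
  define \<phi> where "\<phi> = caputo_kat a b al rho \<eta>"
  have \<eta>C1: "C1_on a b \<eta>" by (rule C1_on_of_real_derivative(1)[OF \<eta>])
  have cont: "continuous_on {a..b} x" "continuous_on {a..b} \<eta>"
    "continuous_on {a..b} \<psi>" "continuous_on {a..b} \<phi>"
    unfolding \<psi>_def \<phi>_def using C1_onD(3) caputo_kat_continuous_on[OF _ pos] x \<eta>C1 pos(2) by auto
  obtain M\<eta> where M\<eta>: "\<And>t. t \<in> {a..b} \<Longrightarrow> \<bar>\<eta> t\<bar> \<le> M\<eta>"
    using continuous_on_compact_bound[OF compact_Icc cont(2)] by auto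
  obtain M\<phi> where M\<phi>: "\<And>t. t \<in> {a..b} \<Longrightarrow> \<bar>\<phi> t\<bar> \<le> M\<phi>"
    using continuous_on_compact_bound[OF compact_Icc cont(4)] by auto
  have J: "Jfun a b al L (\<lambda>t. x t + e * \<eta> t) rho = integral {a..b} (\<lambda>t. L t (x t + e * \<eta> t) (\<psi> t + e * \<phi> t))"
    for e
    unfolding Jfun_def \<psi>_def \<phi>_def
    by (intro integral_cong) (simp add: caputo_kat_add_scaled[OF x \<eta>C1 pos])
  have "((\<lambda>e. integral {a..b} (\<lambda>t. L t (x t + e * \<eta> t) (\<psi> t + e * \<phi> t))) has_real_derivative
      integral {a..b} (\<lambda>t. partial2 L t (x t + 0 * \<eta> t) (\<psi> t + 0 * \<phi> t) * \<eta> t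
        + partial3 L t (x t + 0 * \<eta> t) (\<psi> t + 0 * \<phi> t) * \<phi> t)) (at 0)"
  proof (rule has_real_derivative_integral[where K = "max M\<eta> M\<phi>"])
    have "\<bar>e * \<eta> t\<bar> \<le> max M\<eta> M\<phi> * \<bar>e\<bar> \<and> \<bar>e * \<phi> t\<bar> \<le> max M\<eta> M\<phi> * \<bar>e\<bar>" if "t \<in> {a..b}" for e t
      using mult_right_mono[OF order_trans[OF M\<eta>[OF that] max.cobounded1], of "\<bar>e\<bar>"]
        mult_right_mono[OF order_trans[OF M\<phi>[OF that] max.cobounded2], of "\<bar>e\<bar>"]
      by (simp add: abs_mult mult.commute)
    then show "\<forall>\<^sub>F e in nhds 0. continuous_on {a..b} (\<lambda>t. x t + e * \<eta> t) \<and>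
        continuous_on {a..b} (\<lambda>t. \<psi> t + e * \<phi> t) \<and>
        (\<forall>t\<in>{a..b}. \<bar>x t + e * \<eta> t - (x t + 0 * \<eta> t)\<bar> \<le> max M\<eta> M\<phi> * \<bar>e - 0\<bar> \<and>
           \<bar>\<psi> t + e * \<phi> t - (\<psi> t + 0 * \<phi> t)\<bar> \<le> max M\<eta> M\<phi> * \<bar>e - 0\<bar>)"
      using cont by (auto intro!: always_eventually continuous_intros)
  qed (auto intro!: derivative_eq_intros)
  then show ?thesis unfolding J \<psi>_def \<phi>_def by simp
qed

lemma euler_lagrange_weak:
  fixes x \<eta> \<eta>' :: "real \<Rightarrow> real" and al rho :: real
  assumes pos: "0 < a" "a < b" "0 < al" "al < 1" "0 < rho" and x: "C1_on a b x"
    and K_diff: "\<And>t. t \<in> {a..b} \<Longrightarrow> kat_right_int b al rho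
        (\<lambda>s. partial3 L s (x s) (caputo_kat a b al rho x s)) differentiable (at t within {a..b})"
    and K'_cont: "continuous_on {a..b}
        (kat_right a b al rho (\<lambda>s. partial3 L s (x s) (caputo_kat a b al rho x s)))"
    and \<eta>: "\<And>t. (\<eta> has_real_derivative \<eta>' t) (at t)" "continuous_on {a..b} \<eta>'" "\<eta> a = 0" "\<eta> b = 0"
    and min: "\<forall>\<^sub>F e in nhds 0. Jfun a b al L x rho \<le> Jfun a b al L (\<lambda>t. x t + e * \<eta> t) rho"
  shows "integral {a..b} (\<lambda>t. (partial2 L t (x t) (caputo_kat a b al rho x t)
           - kat_right a b al rho (\<lambda>s. partial3 L s (x s) (caputo_kat a b al rho x s)) t) * \<eta> t) = 0"
proof -
  define \<psi> where "\<psi> = caputo_kat a b al rho x"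
  define \<phi> where "\<phi> = caputo_kat a b al rho \<eta>"
  define f where "f s = partial3 L s (x s) (\<psi> s)" for s
  define D where "D = kat_right a b al rho f"
  have \<eta>C1: "C1_on a b \<eta>" by (rule C1_on_of_real_derivative(1)[OF \<eta>(1,2)])
  have x_cont: "continuous_on {a..b} x" by (rule C1_onD(3)[OF x pos(2)])
  have \<eta>_cont: "continuous_on {a..b} \<eta>" by (rule C1_onD(3)[OF \<eta>C1 pos(2)])
  have \<psi>_cont: "continuous_on {a..b} \<psi>" and \<phi>_cont: "continuous_on {a..b} \<phi>"
    unfolding \<psi>_def \<phi>_def using caputo_kat_continuous_on[OF _ pos] x \<eta>C1 by auto
  have f_cont: "continuous_on {a..b} f"
    unfolding f_def by (rule continuous_on_compose_Icc_UNIV[OF L_d3_cont x_cont \<psi>_cont])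
  have p2_cont: "continuous_on {a..b} (\<lambda>t. partial2 L t (x t) (\<psi> t))"
    by (rule continuous_on_compose_Icc_UNIV[OF L_d2_cont x_cont \<psi>_cont])
  obtain d where d: "0 < d" "\<And>e. dist e 0 < d \<Longrightarrow> Jfun a b al L x rho \<le> Jfun a b al L (\<lambda>t. x t + e * \<eta> t) rho"
    using min unfolding eventually_nhds_metric by auto
  then have "\<forall>e. \<bar>0 - e\<bar> < d \<longrightarrow> Jfun a b al L (\<lambda>t. x t + 0 * \<eta> t) rho \<le> Jfun a b al L (\<lambda>t. x t + e * \<eta> t) rho"
    by (simp add: dist_real_def)
  from DERIV_local_min[OF has_real_derivative_Jfun_variation[OF pos x \<eta>(1,2)] d(1) this]
  have first_variation: "integral {a..b} (\<lambda>t. partial2 L t (x t) (\<psi> t) * \<eta> t + f t * \<phi> t) = 0"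
    unfolding f_def \<psi>_def \<phi>_def .
  have "integral {a..b} (\<lambda>t. f t * \<phi> t) = - integral {a..b} (\<lambda>t. \<eta> t * D t)"
    unfolding \<phi>_def D_def
    using integral_caputo_kat_by_parts[OF pos f_cont _ _ \<eta>] K_diff K'_cont
    unfolding f_def \<psi>_def by simp
  moreover have "integral {a..b} (\<lambda>t. partial2 L t (x t) (\<psi> t) * \<eta> t + f t * \<phi> t)
      = integral {a..b} (\<lambda>t. partial2 L t (x t) (\<psi> t) * \<eta> t) + integral {a..b} (\<lambda>t. f t * \<phi> t)"
    by (intro integral_add integrable_continuous_interval continuous_intros p2_cont \<eta>_cont f_cont \<phi>_cont)
  moreover have "integral {a..b} (\<lambda>t. (partial2 L t (x t) (\<psi> t) - D t) * \<eta> t)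
      = integral {a..b} (\<lambda>t. partial2 L t (x t) (\<psi> t) * \<eta> t) - integral {a..b} (\<lambda>t. \<eta> t * D t)"
    unfolding left_diff_distrib D_def
    by (subst integral_diff) (auto simp: mult.commute intro!: integrable_continuous_interval
        continuous_intros p2_cont \<eta>_cont K'_cont[folded \<psi>_def, folded f_def])
  ultimately show ?thesis
    using first_variation unfolding D_def f_def \<psi>_def by simp
qed

lemma euler_lagrange:
  fixes x :: "real \<Rightarrow> real" and al rho :: real
  assumes pos: "0 < a" "a < b" "0 < al" "al < 1" "0 < rho" and x: "C1_on a b x"
    and K_diff: "\<And>t. t \<in> {a..b} \<Longrightarrow> kat_right_int b al rho
        (\<lambda>s. partial3 L s (x s) (caputo_kat a b al rho x s)) differentiable (at t within {a..b})"
    and K'_cont: "continuous_on {a..b}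
        (kat_right a b al rho (\<lambda>s. partial3 L s (x s) (caputo_kat a b al rho x s)))"
    and min: "\<exists>\<delta>>0. \<forall>y. C1_on a b y \<and> y a = x a \<and> y b = x b
        \<and> (\<forall>t\<in>{a..b}. \<bar>y t - x t\<bar> < \<delta> \<and> \<bar>dC1 a b y t - dC1 a b x t\<bar> < \<delta>)
        \<longrightarrow> Jfun a b al L x rho \<le> Jfun a b al L y rho"
  shows "\<forall>t\<in>{a..b}. partial2 L t (x t) (caputo_kat a b al rho x t)
           - kat_right a b al rho (\<lambda>s. partial3 L s (x s) (caputo_kat a b al rho x s)) t = 0"
proof (rule fundamental_lemma_variations[OF pos(2)])
  show "continuous_on {a..b} (\<lambda>t. partial2 L t (x t) (caputo_kat a b al rho x t)
      - kat_right a b al rho (\<lambda>s. partial3 L s (x s) (caputo_kat a b al rho x s)) t)"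
    using continuous_on_compose_Icc_UNIV[OF L_d2_cont C1_onD(3)[OF x pos(2)]
        caputo_kat_continuous_on[OF x pos]] K'_cont
    by (intro continuous_intros)
  fix \<eta> \<eta>' :: "real \<Rightarrow> real"
  assume \<eta>: "\<And>t. (\<eta> has_real_derivative \<eta>' t) (at t)" "continuous_on {a..b} \<eta>'" "\<eta> a = 0" "\<eta> b = 0"
  show "integral {a..b} (\<lambda>t. (partial2 L t (x t) (caputo_kat a b al rho x t)
      - kat_right a b al rho (\<lambda>s. partial3 L s (x s) (caputo_kat a b al rho x s)) t) * \<eta> t) = 0"
    by (rule euler_lagrange_weak[OF pos x K_diff K'_cont \<eta>
          eventually_ge_along_variation[where J = "\<lambda>y. Jfun a b al L y rho", OF pos(2) x \<eta> min]])
qed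

lemma order_condition:
  fixes x :: "real \<Rightarrow> real" and al rho :: real
  assumes pos: "0 < a" "a < b" "0 < al" "al < 1" "0 < rho" and x: "C1_on a b x"
    and min: "\<forall>\<^sub>F r in nhds rho. Jfun a b al L x rho \<le> Jfun a b al L x r"
  shows "integral {a..b} (\<lambda>t. partial3 L t (x t) (caputo_kat a b al rho x t)
           * deriv (\<lambda>r. caputo_kat a b al r x t) rho) = 0"
proof -
  obtain K where K: "0 \<le> K"
    "\<And>r r' t. rho / 2 \<le> r \<Longrightarrow> r \<le> 2 * rho \<Longrightarrow> rho / 2 \<le> r' \<Longrightarrow> r' \<le> 2 * rho \<Longrightarrow> t \<in> {a..b} \<Longrightarrow>
       \<bar>caputo_kat a b al r x t - caputo_kat a b al r' x t\<bar> \<le> K * \<bar>r - r'\<bar>"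
    using caputo_kat_order_lipschitz[OF x pos(1-4), of "rho / 2" "2 * rho"] pos by auto
  have deriv: "((\<lambda>r. Jfun a b al L x r) has_real_derivative
      integral {a..b} (\<lambda>t. partial2 L t (x t) (caputo_kat a b al rho x t) * 0
        + partial3 L t (x t) (caputo_kat a b al rho x t) * deriv (\<lambda>r. caputo_kat a b al r x t) rho)) (at rho)"
    unfolding Jfun_def
  proof (rule has_real_derivative_integral[where K = K])
    have "\<forall>\<^sub>F r in nhds rho. r \<in> {rho / 2 <..< 2 * rho}"
      using pos by (intro eventually_nhds_in_open) auto
    then show "\<forall>\<^sub>F r in nhds rho. continuous_on {a..b} x \<and> continuous_on {a..b} (caputo_kat a b al r x) \<and>
        (\<forall>t\<in>{a..b}. \<bar>x t - x t\<bar> \<le> K * \<bar>r - rho\<bar> \<and>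
           \<bar>caputo_kat a b al r x t - caputo_kat a b al rho x t\<bar> \<le> K * \<bar>r - rho\<bar>)"
    proof eventually_elim
      case (elim r)
      then show ?case
        using C1_onD(3)[OF x pos(2)] caputo_kat_continuous_on[OF x pos(1-4)] K pos by auto
    qed
    fix t assume t: "t \<in> {a..b}"
    show "((\<lambda>r. x t) has_real_derivative 0) (at rho)" by simp
    show "((\<lambda>r. caputo_kat a b al r x t) has_real_derivative deriv (\<lambda>r. caputo_kat a b al r x t) rho) (at rho)"
      using caputo_kat_differentiable_order[OF x pos t] by (simp add: DERIV_deriv_iff_real_differentiable)
  qed
  obtain d where d: "0 < d" "\<And>r. dist r rho < d \<Longrightarrow> Jfun a b al L x rho \<le> Jfun a b al L x r"
    using min unfolding eventually_nhds_metric by blast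
  then have "\<forall>r. \<bar>rho - r\<bar> < d \<longrightarrow> Jfun a b al L x rho \<le> Jfun a b al L x r"
    by (simp add: dist_real_def abs_minus_commute)
  from DERIV_local_min[OF deriv d(1) this] show ?thesis by simp
qed

end

theorem mainTheorem6:
  fixes a b alpha xa xb rho :: real
    and L :: "real \<Rightarrow> real \<Rightarrow> real \<Rightarrow> real"
    and x :: "real \<Rightarrow> real"
  assumes ab: "0 < a" "a < b"
    and alpha: "0 < alpha" "alpha < 1"
    and L_cont: "continuous_on ({a..b} \<times> UNIV) (\<lambda>(t, y, z). L t y z)"
    and L_d2: "\<And>t y z. t \<in> {a..b} \<Longrightarrow> (\<lambda>y'. L t y' z) differentiable (at y)"
    and L_d3: "\<And>t y z. t \<in> {a..b} \<Longrightarrow> (\<lambda>z'. L t y z') differentiable (at z)"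
    and L_d2_cont: "continuous_on ({a..b} \<times> UNIV) (\<lambda>(t, y, z). partial2 L t y z)"
    and L_d3_cont: "continuous_on ({a..b} \<times> UNIV) (\<lambda>(t, y, z). partial3 L t y z)"
    and right_reg: "\<And>r y. 0 < r \<Longrightarrow> C1_on a b y \<Longrightarrow>
         (\<forall>t\<in>{a..b}. kat_right_int b alpha r
              (\<lambda>s. partial3 L s (y s) (caputo_kat a b alpha r y s)) differentiable (at t within {a..b}))
         \<and> continuous_on {a..b}
             (kat_right a b alpha r (\<lambda>s. partial3 L s (y s) (caputo_kat a b alpha r y s)))"
    and xU: "C1_on a b x" "x a = xa" "x b = xb"
    and rho: "0 < rho"
    and locmin: "\<exists>\<delta>>0. \<forall>y r. C1_on a b y \<and> y a = xa \<and> y b = xb \<and> 0 < r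
         \<and> (\<forall>t\<in>{a..b}. \<bar>y t - x t\<bar> < \<delta> \<and> \<bar>dC1 a b y t - dC1 a b x t\<bar> < \<delta>)
         \<and> \<bar>r - rho\<bar> < \<delta>
         \<longrightarrow> Jfun a b alpha L x rho \<le> Jfun a b alpha L y r"
  shows "(\<forall>t\<in>{a..b}.
           partial2 L t (x t) (caputo_kat a b alpha rho x t)
           - kat_right a b alpha rho (\<lambda>s. partial3 L s (x s) (caputo_kat a b alpha rho x s)) t = 0)
         \<and> integral {a..b}
           (\<lambda>t. partial3 L t (x t) (caputo_kat a b alpha rho x t)
                * deriv (\<lambda>r. caputo_kat a b alpha r x t) rho) = 0"
proof
  interpret regular_lagrangian a b L
    using L_cont L_d2 L_d3 L_d2_cont L_d3_cont by unfold_locales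
  obtain \<delta> where \<delta>: "0 < \<delta>" and min: "\<And>y r. C1_on a b y \<Longrightarrow> y a = xa \<Longrightarrow> y b = xb \<Longrightarrow> 0 < r \<Longrightarrow>
      \<forall>t\<in>{a..b}. \<bar>y t - x t\<bar> < \<delta> \<and> \<bar>dC1 a b y t - dC1 a b x t\<bar> < \<delta> \<Longrightarrow> \<bar>r - rho\<bar> < \<delta> \<Longrightarrow>
      Jfun a b alpha L x rho \<le> Jfun a b alpha L y r"
    using locmin by blast
  show "\<forall>t\<in>{a..b}. partial2 L t (x t) (caputo_kat a b alpha rho x t)
      - kat_right a b alpha rho (\<lambda>s. partial3 L s (x s) (caputo_kat a b alpha rho x s)) t = 0"
    using right_reg[OF rho xU(1)] \<delta> min[where r = rho] xU rho
    by (intro euler_lagrange[OF ab alpha rho xU(1)]) auto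
  have "\<forall>\<^sub>F r in nhds rho. r \<in> {0 <..} \<inter> {rho - \<delta> <..< rho + \<delta>}"
    using \<delta> rho by (intro eventually_nhds_in_open) auto
  then have "\<forall>\<^sub>F r in nhds rho. Jfun a b alpha L x rho \<le> Jfun a b alpha L x r"
    by eventually_elim (use min[of x] xU \<delta> in \<open>auto simp: abs_less_iff\<close>)
  then show "integral {a..b} (\<lambda>t. partial3 L t (x t) (caputo_kat a b alpha rho x t)
      * deriv (\<lambda>r. caputo_kat a b alpha r x t) rho) = 0"
    by (rule order_condition[OF ab alpha rho xU(1)])
qed

end
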